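(* Let $Y=T\times_H\mathfrak h^\circ\times\mathbb C^{h+1}$ be a tall local model with defining polynomial $P(z)=\prod_{i=0}^h z_i^{\xi_i}$, and assume $\xi_i=0$ for all $i>k$. Let $K=\{\lambda\in(S^1)^{k+1}\mid\prod_{j=0}^k\lambda_j^{\xi_j}=1\}$ act naturally on $\mathbb C^{k+1}$ (with homogeneous moment map). Then the inclusion $\mathbb C^{k+1}\hookrightarrow Y$, $(z_0,\dots,z_k)\mapsto[1,0,(z_0,\dots,z_k,0,\dots,0)]$, induces a diffeomorphism $\mathbb C^{k+1}/\!/K\to Y/\!/T$. In particular, if $P(z)=z_0$ then $\overline P\colon Y/\!/T\to\mathbb C$ is a diffeomorphism with inverse $z\mapsto[1,0,(z,0)]$.
   Context: $T$ is a torus with Lie algebra $\mathfrak t$, $H\subseteq T$ a closed subgroup of dimension $h$ with Lie algebra $\mathfrak h$, $\rho\colon H\to(S^1)^{h+1}$ an injective homomorphism, $\eta_i\in\mathfrak h^*$ the differential of the $i$-th component of $\rho$. A fixed inner product on $\mathfrak t$ identifies $\mathfrak t^*\cong\mathfrak h^\circ\oplus\mathfrak h^*$. The local model is $Y=T\times_H\mathfrak h^\circ\times\mathbb C^{h+1}$ ($H$ acting on $T$ by multiplication, trivially on $\mathfrak h^\circ$, on $\mathbb C^{h+1}$ by $h\cdot z=\rho(h^{-1})z$) with its canonical symplectic form, $T$-action $s\cdot[t,\alpha,z]=[st,\alpha,z]$ and moment map $\Phi_Y([t,\alpha,z])=\alpha+\frac12\sum_i\eta_i|z_i|^2$. $Y$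 is tall if $\Phi_Y^{-1}(0)$ contains more than one $T$-orbit; then there is a unique $\xi\in\mathbb Z_{\ge0}^{h+1}$ with $\lambda\mapsto\prod_j\lambda_j^{\xi_j}$ giving a short exact sequence $1\to H\xrightarrow{\rho}(S^1)^{h+1}\to S^1\to1$, and the defining polynomial is $P(z)=\prod_jz_j^{\xi_j}$ (also viewed on $Y$). Reduced spaces $X/\!/G=\Phi^{-1}(0)/G$ carry the subquotient topology and the sheaf of functions whose pullback to $\Phi^{-1}(0)$ extends to a smooth invariant function; diffeomorphisms are homeomorphisms inducing isomorphisms of these sheaves; $\overline P$ is the map induced by $P$ on $Y/\!/T$. *)

theory Defs
  imports "HOL-Analysis.Analysis"
begin

definition pdir :: "'a::euclidean_space \<Rightarrow> ('a \<Rightarrow> real) \<Rightarrow> 'a \<Rightarrow> real" where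
  "pdir v f x = (THE D. ((\<lambda>t::real. f (x + t *\<^sub>R v)) has_real_derivative D) (at 0))"

fun pdirs :: "'a::euclidean_space list \<Rightarrow> ('a \<Rightarrow> real) \<Rightarrow> 'a \<Rightarrow> real" where
  "pdirs [] f = f"
| "pdirs (v # vs) f = pdir v (pdirs vs f)"

definition smooth_on :: "'a::euclidean_space set \<Rightarrow> ('a \<Rightarrow> real) \<Rightarrow> bool" where
  "smooth_on V f \<longleftrightarrow> open V \<and>
     (\<forall>vs. set vs \<subseteq> Basis \<longrightarrow>
        continuous_on V (pdirs vs f) \<and>
        (\<forall>v\<in>Basis. \<forall>x\<in>V. (\<lambda>t::real. pdirs vs f (x + t *\<^sub>R v)) differentiable (at 0)))"

definition smooth_sub :: "'a::euclidean_space set \<Rightarrow> 'a set \<Rightarrow> ('a \<Rightarrow> real) \<Rightarrow> bool" where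
  "smooth_sub M W F \<longleftrightarrow> (\<exists>V F'. open V \<and> V \<inter> M = W \<and> smooth_on V F' \<and> (\<forall>x\<in>W. F' x = F x))"

definition orb :: "('a \<Rightarrow> 'a) set \<Rightarrow> 'a \<Rightarrow> 'a set" where
  "orb G x = {g x | g. g \<in> G}"

definition rpts :: "('a \<Rightarrow> 'a) set \<Rightarrow> 'a set \<Rightarrow> 'a set set" where
  "rpts G Z = orb G ` Z"

definition r_open :: "('a::topological_space \<Rightarrow> 'a) set \<Rightarrow> 'a set \<Rightarrow> 'a set set \<Rightarrow> bool" where
  "r_open G Z U \<longleftrightarrow> U \<subseteq> rpts G Z \<and> openin (top_of_set Z) (\<Union>U)"

definition r_smooth :: "'a::euclidean_space set \<Rightarrow> ('a \<Rightarrow> 'a) set \<Rightarrow> 'a set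
      \<Rightarrow> 'a set set \<Rightarrow> ('a set \<Rightarrow> real) \<Rightarrow> bool" where
  "r_smooth M G Z U f \<longleftrightarrow> (\<exists>W F. openin (top_of_set M) W \<and> (\<forall>g\<in>G. \<forall>x\<in>W. g x \<in> W) \<and>
      W \<inter> Z = \<Union>U \<and> smooth_sub M W F \<and> (\<forall>g\<in>G. \<forall>x\<in>W. F (g x) = F x) \<and>
      (\<forall>x\<in>\<Union>U. F x = f (orb G x)))"

text \<open>Diffeomorphism between spaces given by (points, open sets, smooth functions on opens).\<close>
definition diffeo :: "'p set \<Rightarrow> ('p set \<Rightarrow> bool) \<Rightarrow> ('p set \<Rightarrow> ('p \<Rightarrow> real) \<Rightarrow> bool)
    \<Rightarrow> 'q set \<Rightarrow> ('q set \<Rightarrow> bool) \<Rightarrow> ('q set \<Rightarrow> ('q \<Rightarrow> real) \<Rightarrow> bool) \<Rightarrow> ('p \<Rightarrow> 'q) \<Rightarrow> bool" where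
  "diffeo P1 O1 S1 P2 O2 S2 \<phi> \<longleftrightarrow> bij_betw \<phi> P1 P2 \<and>
     (\<forall>U. U \<subseteq> P2 \<longrightarrow> (O2 U \<longleftrightarrow> O1 (\<phi> -` U \<inter> P1))) \<and>
     (\<forall>U f. O2 U \<longrightarrow> (S2 U f \<longleftrightarrow> S1 (\<phi> -` U \<inter> P1) (f \<circ> \<phi>)))"

definition torus :: "(complex^'n) set" where
  "torus = {t. \<forall>j. cmod (t $ j) = 1}"

definition expT :: "real^'n \<Rightarrow> complex^'n" where
  "expT X = (\<chi> j. cis (X $ j))"

definition vinv :: "complex^'n \<Rightarrow> complex^'n" where
  "vinv a = (\<chi> j. inverse (a $ j))"

definition closed_subgroup :: "(complex^'n) set \<Rightarrow> bool" where
  "closed_subgroup H \<longleftrightarrow> H \<subseteq> torus \<and> 1 \<in> H \<and> (\<forall>a\<in>H. \<forall>b\<in>H. a * b \<in> H) \<and>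
     (\<forall>a\<in>H. vinv a \<in> H) \<and> closed H"

definition lie_alg :: "(complex^'n) set \<Rightarrow> (real^'n) set" where
  "lie_alg H = {X. \<forall>s::real. expT (s *\<^sub>R X) \<in> H}"

text \<open>Differential eta_i of the i-th component of rho (Lie algebra of S^1 identified with R via cis).\<close>
definition eta :: "(complex^'n \<Rightarrow> complex^'m) \<Rightarrow> 'm \<Rightarrow> real^'n \<Rightarrow> real" where
  "eta \<rho> i X = (THE c. \<forall>s::real. \<rho> (expT (s *\<^sub>R X)) $ i = cis (s * c))"

text \<open>Annihilator of h in t* (t* identified with R^n via the dot product).\<close>
definition annih :: "(complex^'n) set \<Rightarrow> (real^'n) set" where
  "annih H = {\<alpha>. \<forall>X\<in>lie_alg H. \<alpha> \<bullet> X = 0}"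

text \<open>eta_i viewed in t* = h\<degree> \<oplus> h*: the extension vanishing on the B-orthogonal complement of h.\<close>
definition etaT :: "real^'n^'n \<Rightarrow> (complex^'n) set \<Rightarrow> (complex^'n \<Rightarrow> complex^'m) \<Rightarrow> 'm \<Rightarrow> real^'n" where
  "etaT B H \<rho> i = (THE v. (\<forall>X\<in>lie_alg H. v \<bullet> X = eta \<rho> i X) \<and>
      (\<forall>Y. (\<forall>X\<in>lie_alg H. X \<bullet> (B *v Y) = 0) \<longrightarrow> v \<bullet> Y = 0))"

definition MY :: "(complex^'n) set \<Rightarrow> ((complex^'n) \<times> (real^'n) \<times> (complex^'m)) set" where
  "MY H = torus \<times> annih H \<times> UNIV"

definition PhiY :: "real^'n^'n \<Rightarrow> (complex^'n) set \<Rightarrow> (complex^'n \<Rightarrow> complex^'m)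
    \<Rightarrow> (complex^'n) \<times> (real^'n) \<times> (complex^'m) \<Rightarrow> real^'n" where
  "PhiY B H \<rho> p = (case p of (t, \<alpha>, z) \<Rightarrow>
      \<alpha> + (1/2) *\<^sub>R (\<Sum>i\<in>UNIV. (cmod (z $ i))\<^sup>2 *\<^sub>R etaT B H \<rho> i))"

definition ZY :: "real^'n^'n \<Rightarrow> (complex^'n) set \<Rightarrow> (complex^'n \<Rightarrow> complex^'m)
    \<Rightarrow> ((complex^'n) \<times> (real^'n) \<times> (complex^'m)) set" where
  "ZY B H \<rho> = {p \<in> MY H. PhiY B H \<rho> p = 0}"

text \<open>Combined action: T acting by s\<cdot>[t,\<alpha>,z] = [st,\<alpha>,z], together with the H-action
  h\<cdot>(t,\<alpha>,z) = (ht, \<alpha>, rho(h^-1) z) defining the quotient T \<times>_H (h\<degree> \<times> C^(h+1)).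
  T-orbits in Y correspond to orbits of this action on representatives.\<close>
definition GY :: "(complex^'n) set \<Rightarrow> (complex^'n \<Rightarrow> complex^'m)
    \<Rightarrow> ((complex^'n) \<times> (real^'n) \<times> (complex^'m) \<Rightarrow> (complex^'n) \<times> (real^'n) \<times> (complex^'m)) set" where
  "GY H \<rho> = {(\<lambda>(t, \<alpha>, z). (s * h * t, \<alpha>, \<rho> (vinv h) * z)) | s h. s \<in> torus \<and> h \<in> H}"

definition polyP :: "('m \<Rightarrow> nat) \<Rightarrow> complex^'m \<Rightarrow> complex" where
  "polyP \<xi> z = (\<Prod>i\<in>UNIV. (z $ i) ^ (\<xi> i))"

definition Pbar :: "('m \<Rightarrow> nat) \<Rightarrow> ((complex^'n) \<times> (real^'n) \<times> (complex^'m)) set \<Rightarrow> complex" where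
  "Pbar \<xi> c = polyP \<xi> (snd (snd (SOME p. p \<in> c)))"

definition tall :: "real^'n^'n \<Rightarrow> (complex^'n) set \<Rightarrow> (complex^'n \<Rightarrow> complex^'m) \<Rightarrow> bool" where
  "tall B H \<rho> \<longleftrightarrow> (\<exists>c1\<in>rpts (GY H \<rho>) (ZY B H \<rho>). \<exists>c2\<in>rpts (GY H \<rho>) (ZY B H \<rho>). c1 \<noteq> c2)"

text \<open>1 \<rightarrow> H \<rightarrow> (S^1)^(h+1) \<rightarrow> S^1 \<rightarrow> 1 exact, second map \<lambda> \<mapsto> \<Prod> \<lambda>_j^\<xi>_j.\<close>
definition exact_seq :: "(complex^'n) set \<Rightarrow> (complex^'n \<Rightarrow> complex^'m) \<Rightarrow> ('m \<Rightarrow> nat) \<Rightarrow> bool" where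
  "exact_seq H \<rho> \<xi> \<longleftrightarrow> inj_on \<rho> H \<and> polyP \<xi> ` torus = {w. cmod w = 1} \<and>
     {l\<in>torus. polyP \<xi> l = 1} = \<rho> ` H"

definition Kgrp :: "('k \<Rightarrow> 'm) \<Rightarrow> ('m \<Rightarrow> nat) \<Rightarrow> (complex^'k) set" where
  "Kgrp \<iota> \<xi> = {l\<in>torus. (\<Prod>j\<in>UNIV. (l $ j) ^ (\<xi> (\<iota> j))) = 1}"

definition GK :: "(complex^'k) set \<Rightarrow> (complex^'k \<Rightarrow> complex^'k) set" where
  "GK K = {(\<lambda>z. l * z) | l. l \<in> K}"

definition muK :: "complex^'k \<Rightarrow> real^'k \<Rightarrow> real" where
  "muK z X = (1/2) * (\<Sum>j\<in>UNIV. X $ j * (cmod (z $ j))\<^sup>2)"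

definition ZK :: "(complex^'k) set \<Rightarrow> (complex^'k) set" where
  "ZK K = {z. \<forall>X\<in>lie_alg K. muK z X = 0}"

text \<open>Inclusion C^(k+1) \<rightarrow> Y, z \<mapsto> [1, 0, (z, 0)] (coordinates placed via \<iota>).\<close>
definition inclY :: "('k \<Rightarrow> 'm) \<Rightarrow> complex^'k \<Rightarrow> (complex^'n) \<times> (real^'n) \<times> (complex^'m)" where
  "inclY \<iota> z = (1, 0, \<chi> i. if i \<in> range \<iota> then z $ (inv \<iota> i) else 0)"

definition induced :: "(complex^'n) set \<Rightarrow> (complex^'n \<Rightarrow> complex^'m) \<Rightarrow> ('k \<Rightarrow> 'm)
    \<Rightarrow> (complex^'k) set \<Rightarrow> ((complex^'n) \<times> (real^'n) \<times> (complex^'m)) set" where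
  "induced H \<rho> \<iota> c = orb (GY H \<rho>) (inclY \<iota> (SOME z. z \<in> c))"

end

theory Submission
  imports Defs
begin

text \<open>On the representatives, \<open>\<Phi>\<^sub>Y = 0\<close> means \<open>\<alpha> = 0\<close> and \<open>(|z\<^sub>i|\<^sup>2)\<^sub>i \<in> \<real>\<xi>\<close>: since \<open>\<rho>\<close> is
  injective the \<open>h + 1\<close> weights \<open>\<eta>\<^sub>i\<close> span \<open>\<h>\<^sup>*\<close>, and differentiating \<open>P \<circ> \<rho> = 1\<close> shows that
  \<open>\<xi>\<close> is their only relation. As \<open>\<xi>\<close> vanishes off the image of \<open>\<iota>\<close>, every orbit in
  \<open>\<Phi>\<^sub>Y\<^sup>-\<^sup>1(0)\<close> contains a point \<open>[1, 0, (z, 0)]\<close> with \<open>z\<close> in the zero level of \<open>K\<close>, and two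
  such points lie in one \<open>T\<close>-orbit iff the \<open>z\<close>'s lie in one \<open>K\<close>-orbit, because by exactness
  \<open>K\<close> is the restriction of \<open>\<rho>(H) = ker P\<close> to these coordinates. The inclusion and the
  coordinate restriction are affine maps sending coordinate vectors to coordinate vectors
  or to \<open>0\<close>; hence they preserve smoothness, and smooth invariant extensions can be
  transported in both directions. If \<open>P = z\<^sub>i\<^sub>0\<close>, the zero level forces all other
  coordinates to vanish, so \<open>P\<close> itself is a coordinate on \<open>Y//T\<close>.\<close>

section \<open>Smooth functions under affine coordinate maps\<close>

lemma has_real_derivative_const_eq_0:
  "((\<lambda>t. k) has_real_derivative D) (at x) \<Longrightarrow> D = 0"
  using DERIV_unique DERIV_const by blast

lemma pdir_0: "pdir 0 f x = 0"
  unfolding pdir_def by (auto intro!: the_equality dest: has_real_derivative_const_eq_0)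

lemma pdirs_0_fun: "pdirs vs (\<lambda>_. 0) = (\<lambda>_. 0)"
  by (induction vs)
    (auto simp: fun_eq_iff pdir_def intro!: the_equality dest: has_real_derivative_const_eq_0)

lemma pdirs_eq_0_if_0_in: "0 \<in> set vs \<Longrightarrow> pdirs vs f = (\<lambda>_. 0)"
proof (induction vs)
  case (Cons v vs)
  show ?case
  proof (cases "v = 0")
    case True
    then show ?thesis by (simp add: fun_eq_iff pdir_0)
  next
    case False
    with Cons show ?thesis using pdirs_0_fun[of "[v]"] by simp
  qed
qed simp

lemma pdir_compose_line:
  assumes "\<And>t. A (x + t *\<^sub>R v) = A x + t *\<^sub>R w"
  shows "pdir v (g \<circ> A) x = pdir w g (A x)"
  unfolding pdir_def using assms by simp

lemma pdirs_compose_affine: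
  assumes "linear L"
  shows "pdirs vs (f \<circ> (\<lambda>x. L x + c)) = pdirs (map L vs) f \<circ> (\<lambda>x. L x + c)"
proof (induction vs)
  case (Cons v vs)
  have "pdir v (pdirs (map L vs) f \<circ> (\<lambda>x. L x + c)) x = pdir (L v) (pdirs (map L vs) f) (L x + c)"
    for x
    by (rule pdir_compose_line)
      (simp add: linear_add[OF assms] linear_scale[OF assms] algebra_simps)
  then show ?case by (simp only: pdirs.simps Cons.IH) (simp add: fun_eq_iff)
qed simp

lemma continuous_on_affine:
  fixes L :: "'a::euclidean_space \<Rightarrow> 'b::real_normed_vector"
  shows "linear L \<Longrightarrow> continuous_on S (\<lambda>x. L x + c)"
  by (intro continuous_intros linear_continuous_on) (simp add: linear_conv_bounded_linear)

text \<open>Coordinate maps sending each basis vector to a basis vector or to 0 turn iterated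
  partial derivatives into iterated partial derivatives, so they preserve smoothness.\<close>

lemma smooth_on_compose_affine:
  fixes L :: "'a::euclidean_space \<Rightarrow> 'b::euclidean_space"
  assumes sm: "smooth_on V f" and lin: "linear L"
    and basis: "\<forall>b\<in>Basis. L b \<in> Basis \<or> L b = 0"
  shows "smooth_on ((\<lambda>x. L x + c) -` V) (f \<circ> (\<lambda>x. L x + c))"
proof -
  let ?A = "\<lambda>x. L x + c"
  have contA: "continuous_on UNIV ?A" by (rule continuous_on_affine[OF lin])
  have "open (?A -` V)"
    using open_vimage[OF _ contA] sm by (simp add: smooth_on_def)
  moreover have "continuous_on (?A -` V) (pdirs vs (f \<circ> ?A)) \<and>
      (\<forall>v\<in>Basis. \<forall>x\<in>?A -` V. (\<lambda>t::real. pdirs vs (f \<circ> ?A) (x + t *\<^sub>R v)) differentiable (at 0))"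
    if vs: "set vs \<subseteq> Basis" for vs
  proof (cases "0 \<in> set (map L vs)")
    case True
    then have "pdirs vs (f \<circ> ?A) = (\<lambda>_. 0)"
      by (simp only: pdirs_compose_affine[OF lin] pdirs_eq_0_if_0_in) (simp add: o_def)
    then show ?thesis by simp
  next
    case False
    then have "set (map L vs) \<subseteq> Basis" using vs basis by auto
    then have cont: "continuous_on V (pdirs (map L vs) f)" and
      diff: "\<And>w x. w \<in> Basis \<Longrightarrow> x \<in> V \<Longrightarrow>
        (\<lambda>t::real. pdirs (map L vs) f (x + t *\<^sub>R w)) differentiable (at 0)"
      using sm unfolding smooth_on_def by blast+
    have "continuous_on (?A -` V) (pdirs (map L vs) f \<circ> ?A)"
      by (rule continuous_on_compose)
        (auto intro: continuous_on_subset[OF contA] continuous_on_subset[OF cont])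
    moreover have "(\<lambda>t::real. pdirs (map L vs) f (?A (x + t *\<^sub>R v))) differentiable (at 0)"
      if "v \<in> Basis" "x \<in> ?A -` V" for v x
    proof -
      have line: "?A (x + t *\<^sub>R v) = ?A x + t *\<^sub>R L v" for t
        by (simp add: linear_add[OF lin] linear_scale[OF lin] algebra_simps)
      show ?thesis
        using that basis diff[of "L v" "?A x"] by (cases "L v = 0") (auto simp: line)
    qed
    ultimately show ?thesis by (simp add: pdirs_compose_affine[OF lin])
  qed
  ultimately show ?thesis unfolding smooth_on_def by blast
qed

lemma eventually_line_in_open:
  fixes x :: "'a::real_normed_vector"
  assumes "open U" "x \<in> U"
  shows "eventually (\<lambda>t::real. x + t *\<^sub>R v \<in> U) (nhds 0)"
proof -
  have "open ((\<lambda>t::real. x + t *\<^sub>R v) -` U)"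
    by (rule open_vimage[OF assms(1)]) (intro continuous_intros)
  then show ?thesis
    unfolding eventually_nhds using assms(2) by force
qed

lemma pdirs_cong_open:
  assumes "open U" "\<forall>x\<in>U. f x = g x"
  shows "\<forall>x\<in>U. pdirs vs f x = pdirs vs g x"
proof (induction vs)
  case (Cons v vs)
  show ?case
  proof
    fix x assume "x \<in> U"
    then have "eventually (\<lambda>t::real. x + t *\<^sub>R v \<in> U) (nhds 0)"
      using eventually_line_in_open assms(1) by blast
    then have "eventually (\<lambda>t::real. pdirs vs f (x + t *\<^sub>R v) = pdirs vs g (x + t *\<^sub>R v)) (nhds 0)"
      by eventually_elim (use Cons in auto)
    then have "((\<lambda>t. pdirs vs f (x + t *\<^sub>R v)) has_real_derivative D) (at 0) \<longleftrightarrow>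
          ((\<lambda>t. pdirs vs g (x + t *\<^sub>R v)) has_real_derivative D) (at 0)" for D
      by (rule DERIV_cong_ev[OF refl _ refl])
    then show "pdirs (v # vs) f x = pdirs (v # vs) g x" by (simp add: pdir_def)
  qed
qed (use assms in simp)

lemma smooth_on_cong_open:
  fixes f :: "'a::euclidean_space \<Rightarrow> real"
  assumes sm: "smooth_on V f" and U: "open U" "U \<subseteq> V" and eq: "\<forall>x\<in>U. f x = g x"
  shows "smooth_on U g"
  unfolding smooth_on_def
proof (intro conjI allI impI ballI)
  fix vs :: "'a list" assume vs: "set vs \<subseteq> Basis"
  have pdirs_eq: "\<forall>x\<in>U. pdirs vs f x = pdirs vs g x" by (rule pdirs_cong_open[OF U(1) eq])
  have "continuous_on U (pdirs vs f)"
    using sm vs U(2) continuous_on_subset unfolding smooth_on_def by blast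
  then show "continuous_on U (pdirs vs g)"
    using continuous_on_cong[OF refl, of U "pdirs vs f" "pdirs vs g"] pdirs_eq by auto
  fix v x :: 'a assume v: "v \<in> Basis" and x: "x \<in> U"
  obtain D where D: "((\<lambda>t. pdirs vs f (x + t *\<^sub>R v)) has_real_derivative D) (at 0)"
    using sm vs v x U(2) unfolding smooth_on_def real_differentiable_def by blast
  have "eventually (\<lambda>t::real. x + t *\<^sub>R v \<in> U) (nhds 0)"
    using eventually_line_in_open U(1) x by blast
  then have agree: "eventually (\<lambda>t::real. pdirs vs f (x + t *\<^sub>R v) = pdirs vs g (x + t *\<^sub>R v)) (nhds 0)"
    by eventually_elim (use pdirs_eq in auto)
  with D have "((\<lambda>t. pdirs vs g (x + t *\<^sub>R v)) has_real_derivative D) (at 0)"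
    using DERIV_cong_ev[OF refl agree refl] by blast
  then show "(\<lambda>t::real. pdirs vs g (x + t *\<^sub>R v)) differentiable (at 0)"
    using real_differentiable_def by blast
qed (use U in simp)

corollary smooth_on_compose_linear:
  fixes L :: "'a::euclidean_space \<Rightarrow> 'b::euclidean_space"
  assumes "smooth_on V f" "linear L" "\<forall>b\<in>Basis. L b \<in> Basis \<or> L b = 0"
  shows "smooth_on (L -` V) (f \<circ> L)"
  using smooth_on_compose_affine[OF assms, of 0] by simp

lemma Basis_vec_cases:
  "b \<in> (Basis :: ('a::euclidean_space^'n) set) \<Longrightarrow> \<exists>i u. u \<in> Basis \<and> b = axis i u"
  by (auto simp: Basis_vec_def)

lemma Basis_prod3_cases:
  "b \<in> (Basis :: ('a::euclidean_space \<times> 'b::euclidean_space \<times> 'c::euclidean_space) set) \<Longrightarrow>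
   (\<exists>u\<in>Basis. b = (u, 0, 0)) \<or> (\<exists>u\<in>Basis. b = (0, u, 0)) \<or> (\<exists>u\<in>Basis. b = (0, 0, u))"
  by (auto simp: Basis_prod_def zero_prod_def)

lemma Basis_prod3_third:
  "u \<in> Basis \<Longrightarrow> ((0::'a::euclidean_space), (0::'b::euclidean_space), u)
     \<in> (Basis :: ('a \<times> 'b \<times> 'c::euclidean_space) set)"
  by (auto simp: Basis_prod_def)

section \<open>Continuous unitary characters of the real line\<close>

lemma cis_scaled_eq_1_imp_0:
  assumes "\<forall>s. cis (s * a) = 1"
  shows "a = 0"
proof (rule ccontr)
  assume "a \<noteq> 0"
  then have "cis ((pi / a) * a) = 1" using assms by blast
  with \<open>a \<noteq> 0\<close> show False by simp
qed

lemma cis_scaled_eq_imp_eq: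
  assumes "\<forall>s. cis (s * c) = cis (s * d)"
  shows "c = d"
proof -
  have "cis (s * (c - d)) = 1" for s
    using assms cis_divide[of "s * c" "s * d"] by (simp add: right_diff_distrib)
  then show ?thesis using cis_scaled_eq_1_imp_0[of "c - d"] by simp
qed

lemma continuous_additive_eq_scaleR:
  fixes k :: "real \<Rightarrow> complex"
  assumes cont: "continuous_on UNIV k" and add: "\<And>x y. k (x + y) = k x + k y"
  shows "k x = of_real x * k 1"
proof -
  define d where "d x = k x - of_real x * k 1" for x
  have d_add: "d (x + y) = d x + d y" for x y
    unfolding d_def by (simp add: add distrib_right)
  then have d_0: "d 0 = 0" using add_cancel_right_right by metis
  have d_minus: "d (- x) = - d x" for x
    using d_add[of x "- x"] d_0 by (simp add: add_eq_0_iff)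
  have d_nat: "d (of_nat n * x) = of_nat n * d x" for n x
    by (induction n) (simp_all add: d_0 d_add distrib_right)
  have d_1: "d 1 = 0" unfolding d_def by simp
  have d_int: "d (of_int m) = 0" for m
  proof (cases m rule: int_cases)
    case (nonneg n)
    then show ?thesis using d_nat[of n 1] d_1 by simp
  next
    case (neg n)
    then show ?thesis using d_nat[of "Suc n" 1] d_1 d_minus[of "of_nat (Suc n)"]
      by (simp del: of_nat_Suc)
  qed
  have d_rat: "d r = 0" if "r \<in> \<rat>" for r
  proof -
    obtain a b where ab: "b > 0" "r = of_int a / of_int b"
      by (rule Rats_cases'[OF \<open>r \<in> \<rat>\<close>]) blast
    then have "of_nat (nat b) * r = of_int a" by simp
    then have "of_nat (nat b) * d r = 0" using d_nat[of "nat b" r] d_int[of a] by simp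
    then show ?thesis using ab by simp
  qed
  have "continuous_on UNIV d" unfolding d_def by (intro continuous_intros cont)
  then have "d x = 0"
    using d_rat Rats_closure_real by (intro continuous_constant_on_closure[of "\<rat>" d 0 x]) auto
  then show ?thesis unfolding d_def by simp
qed

text \<open>The values of a continuous function with \<open>exp \<circ> D = 1\<close> lie in the discrete set
  \<open>2\<pi>i\<int>\<close>.\<close>

lemma continuous_exp_eq_1_constant:
  fixes D :: "'a::topological_space \<Rightarrow> complex"
  assumes "connected S" "continuous_on S D" "\<And>x. x \<in> S \<Longrightarrow> exp (D x) = 1"
  shows "D constant_on S"
proof (rule continuous_discrete_range_constant[OF assms(1,2)])
  have two_pi_Ints: "\<exists>n::int. D x = \<i> * of_real (2 * pi * of_int n)" if x: "x \<in> S" for x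
  proof -
    obtain n :: int where "Re (D x) = 0" "Im (D x) = of_int (2 * n) * pi"
      using exp_eq_1 assms(3)[OF x] by blast
    then have "D x = \<i> * of_real (2 * pi * of_int n)" by (simp add: complex_eq_iff)
    then show ?thesis by blast
  qed
  fix x assume x: "x \<in> S"
  show "\<exists>e>0. \<forall>y. y \<in> S \<and> D y \<noteq> D x \<longrightarrow> e \<le> norm (D y - D x)"
  proof (intro exI conjI allI impI)
    fix y assume y: "y \<in> S \<and> D y \<noteq> D x"
    obtain n m :: int where n: "D y = \<i> * of_real (2 * pi * of_int n)"
      and m: "D x = \<i> * of_real (2 * pi * of_int m)"
      using two_pi_Ints x y by metis
    have "1 \<le> \<bar>of_int n - of_int m :: real\<bar>" using y n m by auto
    moreover have "D y - D x = \<i> * of_real (2 * pi * (of_int n - of_int m))"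
      unfolding n m by (simp add: algebra_simps)
    then have "norm (D y - D x) = 2 * pi * \<bar>of_int n - of_int m :: real\<bar>"
      by (simp only: norm_mult norm_ii norm_of_real abs_mult) simp
    ultimately show "2 * pi \<le> norm (D y - D x)" by simp
  qed simp
qed

lemma continuous_unit_character_eq_cis:
  fixes \<phi> :: "real \<Rightarrow> complex"
  assumes cont: "continuous_on UNIV \<phi>" and hom: "\<And>s t. \<phi> (s + t) = \<phi> s * \<phi> t"
    and norm: "\<And>s. cmod (\<phi> s) = 1"
  shows "\<exists>c. \<forall>s. \<phi> s = cis (s * c)"
proof -
  have nonzero: "\<phi> s \<noteq> 0" for s using norm[of s] by auto
  obtain g where cont_g: "continuous_on UNIV g" and exp_g: "\<And>x. \<phi> x = exp (g x)"
    by (rule continuous_logarithm_on_contractible[OF cont contractible_UNIV]) (use nonzero in auto)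
  have g_add: "g (s + t) = g s + g t - g 0" for s t
  proof -
    define D where "D s = g (s + t) - g s - g t" for s
    have "exp (D s) = 1" for s
      using hom[of s t] nonzero by (simp add: D_def exp_diff flip: exp_g)
    moreover have "continuous_on UNIV D"
      unfolding D_def by (intro continuous_intros continuous_on_compose2[OF cont_g] cont_g) auto
    ultimately have "D constant_on UNIV"
      by (intro continuous_exp_eq_1_constant) auto
    then have "D s = D 0" by (auto simp: constant_on_def)
    then show ?thesis unfolding D_def by (simp add: algebra_simps)
  qed
  define k where "k s = g s - g 0" for s
  have "continuous_on UNIV k" unfolding k_def by (intro continuous_intros cont_g)
  then have k: "k s = of_real s * k 1" for s
    by (rule continuous_additive_eq_scaleR) (simp add: k_def g_add)
  have "\<phi> 0 = 1" using hom[of 0 0] nonzero[of 0] by simp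
  then have "\<phi> s = exp (k s)" for s
    using exp_g[of s] exp_g[of 0] by (simp add: k_def exp_diff)
  then have \<phi>_exp: "\<phi> s = exp (of_real s * k 1)" for s
    using k[of s] by simp
  then have "Re (k 1) = 0" using norm[of 1] by simp
  then have "k 1 = \<i> * of_real (Im (k 1))" by (simp add: complex_eq_iff)
  then have "\<phi> s = exp (\<i> * of_real (s * Im (k 1)))" for s
    using \<phi>_exp[of s] by (metis mult.left_commute of_real_mult)
  then have "\<phi> s = cis (s * Im (k 1))" for s
    by (simp add: cis_conv_exp)
  then show ?thesis by blast
qed

section \<open>Linear algebra\<close>

lemma surj_matrix_vector_mult_if_posdef:
  fixes B :: "real^'n^'n"
  assumes "\<forall>x. x \<noteq> 0 \<longrightarrow> x \<bullet> (B *v x) > 0"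
  shows "surj (\<lambda>x. B *v x)"
proof (rule linear_injective_imp_surjective)
  show "inj (\<lambda>x. B *v x)"
  proof (rule injI)
    fix x y assume "B *v x = B *v y"
    then have "(x - y) \<bullet> (B *v (x - y)) = 0" by (simp add: matrix_vector_mult_diff_distrib)
    then show "x = y" using assms by (metis eq_iff_diff_eq_0 less_irrefl)
  qed
qed simp_all

lemma posdef_image_plus_orthogonal:
  fixes B :: "real^'n^'n"
  assumes pos: "\<forall>x. x \<noteq> 0 \<longrightarrow> x \<bullet> (B *v x) > 0" and S: "subspace S"
  obtains w r where "w \<in> S" "\<forall>x\<in>S. x \<bullet> r = 0" "u = B *v w + r"
proof -
  define BS where "BS = (\<lambda>w. B *v w) ` S"
  define T where "T = {y. \<forall>x\<in>S. orthogonal x y}"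
  have B_lin: "linear (\<lambda>x. B *v x)" by simp
  have B_inj: "inj (\<lambda>x. B *v x)"
    using surj_matrix_vector_mult_if_posdef[OF pos] B_lin
    by (simp add: linear_surjective_imp_injective)
  have sub_BS: "subspace BS" unfolding BS_def by (rule linear_subspace_image[OF B_lin S])
  have sub_T: "subspace T" unfolding T_def by (rule subspace_orthogonal_to_vectors)
  have "dim BS = dim S"
    unfolding BS_def by (rule dim_image_eq[OF B_lin]) (use B_inj in \<open>auto simp: inj_on_def\<close>)
  moreover have "dim T + dim S = dim (UNIV :: (real^'n) set)"
    unfolding T_def using dim_subspace_orthogonal_to_vectors[OF S subspace_UNIV] by simp
  moreover have "dim (BS \<inter> T) = 0"
    unfolding dim_eq_0
  proof
    fix z assume "z \<in> BS \<inter> T"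
    then obtain w where w: "w \<in> S" "z = B *v w" "orthogonal w z" unfolding BS_def T_def by auto
    then have "w = 0" using pos by (metis less_irrefl orthogonal_def)
    then show "z \<in> {0}" using w by simp
  qed
  ultimately have "dim {x + y |x y. x \<in> BS \<and> y \<in> T} = dim (UNIV :: (real^'n) set)"
    using dim_sums_Int[OF sub_BS sub_T] by linarith
  then have "span {x + y |x y. x \<in> BS \<and> y \<in> T} = UNIV"
    using dim_eq_full[of "{x + y |x y. x \<in> BS \<and> y \<in> T}"] by simp
  then have "{x + y |x y. x \<in> BS \<and> y \<in> T} = UNIV"
    using span_eq_iff[of "{x + y |x y. x \<in> BS \<and> y \<in> T}"] subspace_sums[OF sub_BS sub_T]
    by simp
  then obtain s r where "s \<in> BS" "r \<in> T" "u = s + r" by blast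
  then show ?thesis
    using that by (auto simp: BS_def T_def orthogonal_def inner_commute)
qed

lemma orthogonal_complement_dim_1:
  fixes x y :: "real^'m"
  assumes S: "subspace S" and dim: "dim S + 1 = CARD('m)" and "x \<noteq> 0"
    and x: "\<forall>s\<in>S. s \<bullet> x = 0" and y: "\<forall>s\<in>S. s \<bullet> y = 0"
  shows "\<exists>a. y = a *\<^sub>R x"
proof -
  define C where "C = {v. \<forall>s\<in>S. orthogonal s v}"
  have "dim C + dim S = dim (UNIV :: (real^'m) set)"
    unfolding C_def using dim_subspace_orthogonal_to_vectors[OF S subspace_UNIV] by simp
  then have "dim C = 1" using dim by simp
  moreover have "subspace C" unfolding C_def by (rule subspace_orthogonal_to_vectors)
  moreover have "x \<in> C" "y \<in> C" using x y by (auto simp: C_def orthogonal_def)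
  ultimately have "span {x} = C"
    using \<open>x \<noteq> 0\<close> by (intro subspace_dim_equal) (auto simp: span_minimal)
  with \<open>y \<in> C\<close> show ?thesis by (auto simp: span_singleton)
qed

lemma in_span_singleton_if_orthogonal_complement:
  fixes e w :: "'a::euclidean_space"
  assumes "\<And>X. e \<bullet> X = 0 \<Longrightarrow> w \<bullet> X = 0"
  shows "\<exists>k. w = k *\<^sub>R e"
proof -
  obtain y r where yr: "y \<in> span {e}" "\<And>v. v \<in> span {e} \<Longrightarrow> orthogonal r v" "w = y + r"
    using orthogonal_subspace_decomp_exists[of "{e}" w] by metis
  obtain k where k: "y = k *\<^sub>R e" using yr(1) by (auto simp: span_singleton)
  have "e \<bullet> r = 0" using yr(2)[of e] by (simp add: span_base orthogonal_def inner_commute)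
  then have "w \<bullet> r = 0" using assms by blast
  moreover have "w \<bullet> r = r \<bullet> r"
    using \<open>e \<bullet> r = 0\<close> k yr(3) by (simp add: inner_add_left)
  ultimately have "r = 0" by simp
  then show ?thesis using yr(3) k by (intro exI[of _ k]) simp
qed

lemma prod_cis: "(\<Prod>i\<in>A. cis (f i)) = cis (\<Sum>i\<in>A. f i)"
  by (induction A rule: infinite_finite_induct) (auto simp: cis_mult)

lemma prod_cis_power: "(\<Prod>i\<in>A. cis (f i) ^ n i) = cis (\<Sum>i\<in>A. real (n i) * f i)"
  unfolding prod_cis[symmetric] by (rule prod.cong) (simp_all add: Complex.DeMoivre)

lemma torus_one: "1 \<in> torus"
  by (simp add: torus_def)

lemma torus_mult: "a \<in> torus \<Longrightarrow> b \<in> torus \<Longrightarrow> a * b \<in> torus"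
  by (simp add: torus_def norm_mult)

lemma torus_vinv: "a \<in> torus \<Longrightarrow> vinv a \<in> torus"
  by (simp add: torus_def vinv_def norm_inverse)

lemma torus_nonzero: "a \<in> torus \<Longrightarrow> a $ j \<noteq> 0"
  by (auto simp: torus_def dest: spec[of _ j])

lemma vinv_mult_self: "a \<in> torus \<Longrightarrow> vinv a * a = 1"
  by (simp add: vinv_def vec_eq_iff torus_nonzero)

lemma vinv_one [simp]: "vinv 1 = 1"
  by (simp add: vinv_def vec_eq_iff)

lemma vinv_vinv [simp]: "vinv (vinv a) = a"
  by (simp add: vinv_def vec_eq_iff)

lemma vinv_mult: "vinv (a * b) = vinv a * vinv b"
  by (simp add: vinv_def vec_eq_iff)

lemma polyP_mult: "polyP \<xi> (a * b) = polyP \<xi> a * polyP \<xi> b"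
  by (simp add: polyP_def power_mult_distrib prod.distrib)

lemma expT_add: "expT (X + Y) = expT X * expT Y"
  by (simp add: expT_def vec_eq_iff cis_mult)

lemma expT_zero: "expT 0 = 1"
  by (simp add: expT_def vec_eq_iff)

lemma expT_in_torus: "expT X \<in> torus"
  by (simp add: expT_def torus_def)

lemma continuous_on_expT_line: "continuous_on UNIV (\<lambda>s::real. expT (s *\<^sub>R X))"
  unfolding expT_def
  by (intro continuous_on_vec_lambda continuous_intros
      continuous_on_compose2[OF continuous_on_cis]) auto

section \<open>Reduced spaces and the group \<open>K\<close>\<close>

lemma mem_Union_iff_orb_mem:
  assumes refl: "\<And>x. x \<in> orb G x" and eq: "\<And>x y. y \<in> orb G x \<Longrightarrow> orb G y = orb G x"
    and U: "U \<subseteq> rpts G Z"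
  shows "x \<in> \<Union>U \<longleftrightarrow> orb G x \<in> U"
proof
  assume "x \<in> \<Union>U"
  then obtain c where c: "c \<in> U" "x \<in> c" by blast
  then obtain y where "c = orb G y" using U by (auto simp: rpts_def)
  then show "orb G x \<in> U" using c eq by metis
qed (use refl in blast)

lemma Kgrp_subset_torus: "Kgrp \<iota> \<xi> \<subseteq> torus"
  by (simp add: Kgrp_def)

lemma Kgrp_one: "1 \<in> Kgrp \<iota> \<xi>"
  by (simp add: Kgrp_def torus_one)

lemma Kgrp_mult: "a \<in> Kgrp \<iota> \<xi> \<Longrightarrow> b \<in> Kgrp \<iota> \<xi> \<Longrightarrow> a * b \<in> Kgrp \<iota> \<xi>"
  by (simp add: Kgrp_def torus_mult power_mult_distrib prod.distrib)

lemma Kgrp_vinv: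
  assumes "a \<in> Kgrp \<iota> \<xi>"
  shows "vinv a \<in> Kgrp \<iota> \<xi>"
proof -
  have "(\<Prod>j\<in>UNIV. (vinv a $ j) ^ \<xi> (\<iota> j)) = inverse (\<Prod>j\<in>UNIV. (a $ j) ^ \<xi> (\<iota> j))"
    using prod_inversef[of "\<lambda>j. (a $ j) ^ \<xi> (\<iota> j)" UNIV]
    by (simp add: vinv_def power_inverse o_def)
  then show ?thesis using assms by (simp add: Kgrp_def torus_vinv)
qed

lemma orb_GK_iff: "w \<in> orb (GK K) z \<longleftrightarrow> (\<exists>l\<in>K. w = l * z)"
  unfolding orb_def GK_def by auto

lemma orb_GK_Kgrp_refl: "z \<in> orb (GK (Kgrp \<iota> \<xi>)) z"
  unfolding orb_GK_iff using Kgrp_one by force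

lemma orb_GK_Kgrp_eq:
  assumes "w \<in> orb (GK (Kgrp \<iota> \<xi>)) z"
  shows "orb (GK (Kgrp \<iota> \<xi>)) w = orb (GK (Kgrp \<iota> \<xi>)) z"
proof -
  obtain l where l: "l \<in> Kgrp \<iota> \<xi>" "w = l * z" using assms orb_GK_iff by blast
  have "vinv l * l = 1" using l(1) Kgrp_subset_torus vinv_mult_self by blast
  then have z: "z = vinv l * w" by (simp add: l(2) mult.assoc[symmetric])
  show ?thesis
  proof (intro set_eqI iffI)
    fix v assume "v \<in> orb (GK (Kgrp \<iota> \<xi>)) w"
    then obtain l' where "l' \<in> Kgrp \<iota> \<xi>" "v = (l' * l) * z"
      unfolding orb_GK_iff l(2) by (auto simp: mult.assoc)
    then show "v \<in> orb (GK (Kgrp \<iota> \<xi>)) z" unfolding orb_GK_iff using l(1) Kgrp_mult by blast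
  next
    fix v assume "v \<in> orb (GK (Kgrp \<iota> \<xi>)) z"
    then obtain l' where "l' \<in> Kgrp \<iota> \<xi>" "v = (l' * vinv l) * w"
      unfolding orb_GK_iff z by (auto simp: mult.assoc)
    then show "v \<in> orb (GK (Kgrp \<iota> \<xi>)) w"
      unfolding orb_GK_iff using Kgrp_vinv[OF l(1)] Kgrp_mult by blast
  qed
qed

lemma expT_in_Kgrp_iff:
  "expT X \<in> Kgrp \<iota> \<xi> \<longleftrightarrow> cis (\<Sum>j\<in>UNIV. real (\<xi> (\<iota> j)) * X $ j) = 1"
  using expT_in_torus[of X] by (simp add: Kgrp_def prod_cis_power expT_def)

lemma lie_alg_Kgrp_iff:
  "X \<in> lie_alg (Kgrp \<iota> \<xi>) \<longleftrightarrow> (\<Sum>j\<in>UNIV. real (\<xi> (\<iota> j)) * X $ j) = 0"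
proof -
  have "X \<in> lie_alg (Kgrp \<iota> \<xi>) \<longleftrightarrow> (\<forall>s. cis (s * (\<Sum>j\<in>UNIV. real (\<xi> (\<iota> j)) * X $ j)) = 1)"
    by (simp add: lie_alg_def expT_in_Kgrp_iff sum_distrib_left algebra_simps)
  then show ?thesis using cis_scaled_eq_1_imp_0 by auto
qed

text \<open>\<open>\<xi> \<circ> \<iota>\<close> spans the annihilator of the Lie algebra of \<open>K\<close>.\<close>

lemma ZK_Kgrp_iff:
  "z \<in> ZK (Kgrp \<iota> \<xi>) \<longleftrightarrow> (\<exists>a. \<forall>j. (cmod (z $ j))\<^sup>2 = a * real (\<xi> (\<iota> j)))"
proof -
  define w where "w = (\<chi> j. (cmod (z $ j))\<^sup>2)"
  define e where "e = (\<chi> j. real (\<xi> (\<iota> j)))"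
  have "z \<in> ZK (Kgrp \<iota> \<xi>) \<longleftrightarrow> (\<forall>X. e \<bullet> X = 0 \<longrightarrow> w \<bullet> X = 0)"
    unfolding ZK_def muK_def Ball_def lie_alg_Kgrp_iff
    by (simp add: w_def e_def inner_vec_def mult.commute)
  also have "\<dots> \<longleftrightarrow> (\<exists>a. w = a *\<^sub>R e)"
    using in_span_singleton_if_orthogonal_complement[of e w] by auto
  also have "\<dots> \<longleftrightarrow> (\<exists>a. \<forall>j. (cmod (z $ j))\<^sup>2 = a * real (\<xi> (\<iota> j)))"
    by (simp add: w_def e_def vec_eq_iff)
  finally show ?thesis .
qed

lemma ZK_Kgrp_orb_closed:
  assumes "w \<in> orb (GK (Kgrp \<iota> \<xi>)) z" "z \<in> ZK (Kgrp \<iota> \<xi>)"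
  shows "w \<in> ZK (Kgrp \<iota> \<xi>)"
proof -
  obtain l where l: "l \<in> Kgrp \<iota> \<xi>" "w = l * z" using assms orb_GK_iff by blast
  then have "cmod (l $ j) = 1" for j by (simp add: Kgrp_def torus_def)
  then show ?thesis using assms(2) unfolding l(2) ZK_Kgrp_iff by (simp add: norm_mult)
qed

section \<open>The local model\<close>

locale local_model =
  fixes H :: "(complex^'n) set" and \<rho> :: "complex^'n \<Rightarrow> complex^'m" and B :: "real^'n^'n"
    and \<xi> :: "'m \<Rightarrow> nat" and \<iota> :: "'k::finite \<Rightarrow> 'm"
  assumes H: "closed_subgroup H"
    and dim_m: "CARD('m) = dim (lie_alg H) + 1"
    and \<rho>_hom: "\<forall>a\<in>H. \<forall>b\<in>H. \<rho> (a * b) = \<rho> a * \<rho> b"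
    and \<rho>_cont: "continuous_on H \<rho>"
    and \<rho>_inj: "inj_on \<rho> H"
    and \<rho>_torus: "\<rho> ` H \<subseteq> torus"
    and B_sym: "transpose B = B"
    and B_pos: "\<forall>x. x \<noteq> 0 \<longrightarrow> x \<bullet> (B *v x) > 0"
    and exact: "exact_seq H \<rho> \<xi>"
    and \<iota>_inj: "inj \<iota>"
    and \<xi>_supp: "\<forall>i. i \<notin> range \<iota> \<longrightarrow> \<xi> i = 0"
begin

abbreviation "\<h> \<equiv> lie_alg H"

lemma H_in_torus: "h \<in> H \<Longrightarrow> h \<in> torus"
  using H by (auto simp: closed_subgroup_def)

lemma H_one: "1 \<in> H"
  using H by (auto simp: closed_subgroup_def)

lemma H_mult: "a \<in> H \<Longrightarrow> b \<in> H \<Longrightarrow> a * b \<in> H"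
  using H by (auto simp: closed_subgroup_def)

lemma H_vinv: "a \<in> H \<Longrightarrow> vinv a \<in> H"
  using H by (auto simp: closed_subgroup_def)

lemma \<rho>_in_torus: "h \<in> H \<Longrightarrow> \<rho> h \<in> torus"
  using \<rho>_torus by auto

lemma \<rho>_one: "\<rho> 1 = 1"
proof -
  have "\<rho> 1 = \<rho> 1 * \<rho> 1" using \<rho>_hom H_one by (metis mult_1)
  then have "\<rho> 1 $ j = 1" for j
    using torus_nonzero[OF \<rho>_in_torus[OF H_one], of j] by (auto simp: vec_eq_iff dest: spec[of _ j])
  then show ?thesis by (simp add: vec_eq_iff)
qed

lemma \<rho>_vinv_mult: "h \<in> H \<Longrightarrow> \<rho> (vinv h) * \<rho> h = 1"
  using \<rho>_hom H_vinv vinv_mult_self[OF H_in_torus] \<rho>_one by metis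

lemma polyP_\<rho>: "h \<in> H \<Longrightarrow> polyP \<xi> (\<rho> h) = 1"
  using exact by (auto simp: exact_seq_def)

lemma ex_\<rho>_eq:
  assumes "l \<in> torus" "polyP \<xi> l = 1"
  shows "\<exists>h\<in>H. \<rho> h = l"
proof -
  have "l \<in> {l \<in> torus. polyP \<xi> l = 1}" using assms by simp
  then have "l \<in> \<rho> ` H" using exact unfolding exact_seq_def by blast
  then show ?thesis by auto
qed

lemma \<xi>_nonzero: "\<exists>i. \<xi> i \<noteq> 0"
proof (rule ccontr)
  assume "\<not> ?thesis"
  then have "polyP \<xi> l = 1" for l by (simp add: polyP_def)
  moreover have "(-1::complex) \<in> polyP \<xi> ` torus" using exact by (simp add: exact_seq_def)
  ultimately show False by auto
qed

lemma subspace_lie_alg: "subspace \<h>"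
  unfolding subspace_def lie_alg_def
  by (simp add: expT_zero H_one scaleR_add_right expT_add H_mult)

lemma expT_line_in_H: "X \<in> \<h> \<Longrightarrow> expT (s *\<^sub>R X) \<in> H"
  by (simp add: lie_alg_def)

lemma \<rho>_expT_line_eq_cis:
  assumes X: "X \<in> \<h>"
  shows "\<rho> (expT (s *\<^sub>R X)) $ i = cis (s * eta \<rho> i X)"
proof -
  have "\<exists>c. \<forall>s. \<rho> (expT (s *\<^sub>R X)) $ i = cis (s * c)"
  proof (rule continuous_unit_character_eq_cis)
    have "continuous_on UNIV (\<lambda>s. \<rho> (expT (s *\<^sub>R X)))"
      by (rule continuous_on_compose2[OF \<rho>_cont continuous_on_expT_line])
        (use X expT_line_in_H in auto)
    then show "continuous_on UNIV (\<lambda>s. \<rho> (expT (s *\<^sub>R X)) $ i)"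
      by (intro continuous_intros)
    show "\<rho> (expT ((s + t) *\<^sub>R X)) $ i = \<rho> (expT (s *\<^sub>R X)) $ i * \<rho> (expT (t *\<^sub>R X)) $ i"
      for s t
      using \<rho>_hom expT_line_in_H[OF X] by (simp add: scaleR_add_left expT_add)
    show "cmod (\<rho> (expT (s *\<^sub>R X)) $ i) = 1" for s
      using \<rho>_in_torus[OF expT_line_in_H[OF X]] by (simp add: torus_def)
  qed
  then obtain c where c: "\<forall>s. \<rho> (expT (s *\<^sub>R X)) $ i = cis (s * c)" by blast
  then have "eta \<rho> i X = c"
    unfolding eta_def by (rule the_equality) (use c cis_scaled_eq_imp_eq in metis)
  then show ?thesis using c by simp
qed

lemma eta_eqI:
  assumes "X \<in> \<h>" "\<forall>s. \<rho> (expT (s *\<^sub>R X)) $ i = cis (s * c)"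
  shows "eta \<rho> i X = c"
  using \<rho>_expT_line_eq_cis assms by (intro cis_scaled_eq_imp_eq) simp

lemma eta_add:
  assumes "X \<in> \<h>" "Y \<in> \<h>"
  shows "eta \<rho> i (X + Y) = eta \<rho> i X + eta \<rho> i Y"
proof (rule eta_eqI)
  show "X + Y \<in> \<h>" using assms subspace_lie_alg by (simp add: subspace_add)
  have "\<rho> (expT (s *\<^sub>R (X + Y))) = \<rho> (expT (s *\<^sub>R X)) * \<rho> (expT (s *\<^sub>R Y))" for s
    using \<rho>_hom expT_line_in_H assms by (simp add: scaleR_add_right expT_add)
  then show "\<forall>s. \<rho> (expT (s *\<^sub>R (X + Y))) $ i = cis (s * (eta \<rho> i X + eta \<rho> i Y))"
    using \<rho>_expT_line_eq_cis assms by (simp add: cis_mult distrib_left)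
qed

lemma eta_scale:
  assumes "X \<in> \<h>"
  shows "eta \<rho> i (c *\<^sub>R X) = c * eta \<rho> i X"
proof (rule eta_eqI)
  show "c *\<^sub>R X \<in> \<h>" using assms subspace_lie_alg by (simp add: subspace_scale)
  show "\<forall>s. \<rho> (expT (s *\<^sub>R (c *\<^sub>R X))) $ i = cis (s * (c * eta \<rho> i X))"
    using \<rho>_expT_line_eq_cis[OF assms, of "_ * c" i] by (simp add: mult.assoc)
qed

lemma eta_zero: "eta \<rho> i 0 = 0"
  using eta_scale[of 0 i 0] subspace_lie_alg by (simp add: subspace_0)

lemma eta_representable: "\<exists>u. \<forall>X\<in>\<h>. u \<bullet> X = eta \<rho> i X"
proof -
  obtain T where T: "0 \<notin> T" "T \<subseteq> \<h>" "pairwise orthogonal T" "independent T" "span T = \<h>"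
    using orthogonal_basis_subspace[OF subspace_lie_alg] by metis
  have "finite T" using T(4) independent_imp_finite by blast
  define u where "u = (\<Sum>b\<in>T. (eta \<rho> i b / (b \<bullet> b)) *\<^sub>R b)"
  have "u \<bullet> b = eta \<rho> i b" if b: "b \<in> T" for b
  proof -
    have "u \<bullet> b = (\<Sum>b'\<in>T. (eta \<rho> i b' / (b' \<bullet> b')) * (b' \<bullet> b))"
      unfolding u_def by (simp add: inner_sum_left)
    also have "\<dots> = (eta \<rho> i b / (b \<bullet> b)) * (b \<bullet> b)"
      by (rule sum.remove[OF \<open>finite T\<close> b, THEN trans])
        (use T(3) b in \<open>auto simp: pairwise_def orthogonal_def intro!: sum.neutral\<close>)
    also have "\<dots> = eta \<rho> i b" using T(1) b by auto
    finally show ?thesis .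
  qed
  moreover have "subspace {X. X \<in> \<h> \<and> u \<bullet> X = eta \<rho> i X}"
    unfolding subspace_def using subspace_lie_alg eta_add eta_scale eta_zero
    by (auto simp: inner_add_right subspace_def)
  ultimately have "span T \<subseteq> {X. X \<in> \<h> \<and> u \<bullet> X = eta \<rho> i X}"
    using T(2) by (intro span_minimal) auto
  then show ?thesis using T(5) by blast
qed

lemma B_inner_commute: "(B *v x) \<bullet> y = x \<bullet> (B *v y)"
  using B_sym dot_lmul_matrix[of x B y] by (metis vector_transpose_matrix)

lemma eq_0_if_orthogonal_lie_alg_and_complement:
  assumes "\<forall>X\<in>\<h>. v \<bullet> X = 0" "\<forall>Y. (\<forall>X\<in>\<h>. X \<bullet> (B *v Y) = 0) \<longrightarrow> v \<bullet> Y = 0"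
  shows "v = 0"
proof -
  obtain y where y: "B *v y = v" using surj_matrix_vector_mult_if_posdef[OF B_pos] by (metis surjD)
  then have "\<forall>X\<in>\<h>. X \<bullet> (B *v y) = 0" using assms(1) by (simp add: inner_commute)
  then have "v \<bullet> y = 0" using assms(2) by blast
  then have "y = 0" using B_pos y by (metis inner_commute less_irrefl)
  then show ?thesis using y by simp
qed

lemma ex1_etaT:
  "\<exists>!v. (\<forall>X\<in>\<h>. v \<bullet> X = eta \<rho> i X) \<and> (\<forall>Y. (\<forall>X\<in>\<h>. X \<bullet> (B *v Y) = 0) \<longrightarrow> v \<bullet> Y = 0)"
proof (rule ex_ex1I)
  obtain u where u: "\<forall>X\<in>\<h>. u \<bullet> X = eta \<rho> i X" using eta_representable by blast
  obtain w r where wr: "w \<in> \<h>" "\<forall>X\<in>\<h>. X \<bullet> r = 0" "u = B *v w + r"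
    using posdef_image_plus_orthogonal[OF B_pos subspace_lie_alg] by blast
  show "\<exists>v. (\<forall>X\<in>\<h>. v \<bullet> X = eta \<rho> i X) \<and> (\<forall>Y. (\<forall>X\<in>\<h>. X \<bullet> (B *v Y) = 0) \<longrightarrow> v \<bullet> Y = 0)"
  proof (intro exI conjI ballI allI impI)
    fix X assume "X \<in> \<h>"
    then have "u \<bullet> X = eta \<rho> i X" "r \<bullet> X = 0" using u wr(2) by (auto simp: inner_commute)
    then show "(B *v w) \<bullet> X = eta \<rho> i X" by (simp add: wr(3) inner_add_left)
  next
    show "(B *v w) \<bullet> Y = 0" if "\<forall>X\<in>\<h>. X \<bullet> (B *v Y) = 0" for Y
      using that wr(1) by (simp add: B_inner_commute)
  qed
next
  fix v1 v2
  assume "(\<forall>X\<in>\<h>. v1 \<bullet> X = eta \<rho> i X) \<and> (\<forall>Y. (\<forall>X\<in>\<h>. X \<bullet> (B *v Y) = 0) \<longrightarrow> v1 \<bullet> Y = 0)"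
    and "(\<forall>X\<in>\<h>. v2 \<bullet> X = eta \<rho> i X) \<and> (\<forall>Y. (\<forall>X\<in>\<h>. X \<bullet> (B *v Y) = 0) \<longrightarrow> v2 \<bullet> Y = 0)"
  then have "v1 - v2 = 0"
    by (intro eq_0_if_orthogonal_lie_alg_and_complement) (auto simp: inner_diff_left)
  then show "v1 = v2" by simp
qed

lemma etaT_on_lie_alg: "X \<in> \<h> \<Longrightarrow> etaT B H \<rho> i \<bullet> X = eta \<rho> i X"
  using theI'[OF ex1_etaT] unfolding etaT_def by blast

lemma etaT_on_complement: "\<forall>X\<in>\<h>. X \<bullet> (B *v Y) = 0 \<Longrightarrow> etaT B H \<rho> i \<bullet> Y = 0"
  using theI'[OF ex1_etaT] unfolding etaT_def by blast

text \<open>Differentiating \<open>P \<circ> \<rho> = 1\<close>.\<close>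

lemma sum_xi_eta_eq_0:
  assumes X: "X \<in> \<h>"
  shows "(\<Sum>i\<in>UNIV. real (\<xi> i) * eta \<rho> i X) = 0"
proof -
  have "cis (s * (\<Sum>i\<in>UNIV. real (\<xi> i) * eta \<rho> i X)) = 1" for s
  proof -
    have "1 = polyP \<xi> (\<rho> (expT (s *\<^sub>R X)))" using polyP_\<rho> expT_line_in_H[OF X] by simp
    also have "\<dots> = (\<Prod>i\<in>UNIV. cis (s * eta \<rho> i X) ^ \<xi> i)"
      unfolding polyP_def using \<rho>_expT_line_eq_cis[OF X] by simp
    also have "\<dots> = cis (\<Sum>i\<in>UNIV. real (\<xi> i) * (s * eta \<rho> i X))" by (rule prod_cis_power)
    finally show ?thesis by (simp add: sum_distrib_left algebra_simps)
  qed
  then show ?thesis using cis_scaled_eq_1_imp_0 by blast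
qed

lemma sum_xi_etaT_eq_0: "(\<Sum>i\<in>UNIV. real (\<xi> i) *\<^sub>R etaT B H \<rho> i) = 0"
  by (rule eq_0_if_orthogonal_lie_alg_and_complement)
    (simp_all add: inner_sum_left sum_xi_eta_eq_0 etaT_on_lie_alg etaT_on_complement)

definition etaT_vec :: "real^'n \<Rightarrow> real^'m" where
  "etaT_vec X = (\<chi> i. etaT B H \<rho> i \<bullet> X)"

lemma linear_etaT_vec: "linear etaT_vec"
  by (rule linearI) (simp_all add: etaT_vec_def vec_eq_iff inner_add_right)

text \<open>Injectivity of \<open>\<rho>\<close> makes the weights separate the points of \<open>\<h>\<close>.\<close>

lemma inj_on_etaT_vec: "inj_on etaT_vec \<h>"
proof -
  have "X = 0" if X: "X \<in> \<h>" and "etaT_vec X = 0" for X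
  proof -
    have "eta \<rho> i X = 0" for i
      using \<open>etaT_vec X = 0\<close> etaT_on_lie_alg[OF X, of i] by (simp add: etaT_vec_def vec_eq_iff)
    then have "\<rho> (expT (s *\<^sub>R X)) = \<rho> 1" for s
      using \<rho>_expT_line_eq_cis[OF X] \<rho>_one by (simp add: vec_eq_iff)
    then have "expT (s *\<^sub>R X) = 1" for s
      using inj_onD[OF \<rho>_inj] expT_line_in_H[OF X] H_one by blast
    then have "cis (s * X $ j) = 1" for s j
      by (simp add: expT_def vec_eq_iff)
    then show "X = 0" using cis_scaled_eq_1_imp_0 by (simp add: vec_eq_iff)
  qed
  then show ?thesis
    using linear_inj_on_iff_eq_0[OF linear_etaT_vec subspace_lie_alg] by blast
qed

text \<open>Dimension count: the \<open>h + 1\<close> weights span \<open>\<h>\<^sup>*\<close>, so their relations form a line.\<close>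

lemma eta_relation_proportional_\<xi>:
  assumes c: "\<forall>X\<in>\<h>. (\<Sum>i\<in>UNIV. c $ i * eta \<rho> i X) = 0"
  shows "\<exists>a. c = a *\<^sub>R (\<chi> i. real (\<xi> i))"
proof (rule orthogonal_complement_dim_1)
  show "subspace (etaT_vec ` \<h>)"
    by (rule linear_subspace_image[OF linear_etaT_vec subspace_lie_alg])
  have "span \<h> = \<h>" using subspace_lie_alg span_eq_iff by blast
  then have "inj_on etaT_vec (span \<h>)" using inj_on_etaT_vec by (simp only:)
  then have "dim (etaT_vec ` \<h>) = dim \<h>" by (rule dim_image_eq[OF linear_etaT_vec])
  then show "dim (etaT_vec ` \<h>) + 1 = CARD('m)" using dim_m by simp
  show "(\<chi> i. real (\<xi> i)) \<noteq> 0" using \<xi>_nonzero by (auto simp: vec_eq_iff)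
  have inner_etaT_vec: "etaT_vec X \<bullet> v = (\<Sum>i\<in>UNIV. v $ i * eta \<rho> i X)" if "X \<in> \<h>" for X v
    unfolding inner_vec_def[of "etaT_vec X"]
    using that by (simp add: etaT_vec_def etaT_on_lie_alg mult.commute)
  show "\<forall>s\<in>etaT_vec ` \<h>. s \<bullet> (\<chi> i. real (\<xi> i)) = 0"
    using sum_xi_eta_eq_0 by (auto simp: inner_etaT_vec)
  show "\<forall>s\<in>etaT_vec ` \<h>. s \<bullet> c = 0"
    using c by (auto simp: inner_etaT_vec)
qed

definition xi_proportional :: "complex^'m \<Rightarrow> bool" where
  "xi_proportional z \<longleftrightarrow> (\<exists>a. \<forall>i. (cmod (z $ i))\<^sup>2 = a * real (\<xi> i))"

text \<open>Pairing \<open>\<Phi>\<^sub>Y = 0\<close> with \<open>\<h>\<close> kills \<open>\<alpha> \<in> \<h>\<degree>\<close> and makes \<open>(|z\<^sub>i|\<^sup>2)\<^sub>i\<close> a relation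
  among the weights, hence a multiple of \<open>\<xi>\<close>; then the weight sum vanishes, so \<open>\<alpha> = 0\<close>.\<close>

lemma mem_ZY_iff: "(t, \<alpha>, z) \<in> ZY B H \<rho> \<longleftrightarrow> t \<in> torus \<and> \<alpha> = 0 \<and> xi_proportional z"
proof
  assume Z: "(t, \<alpha>, z) \<in> ZY B H \<rho>"
  then have t: "t \<in> torus" and \<alpha>: "\<alpha> \<in> annih H"
    and \<Phi>: "\<alpha> + (1/2) *\<^sub>R (\<Sum>i\<in>UNIV. (cmod (z $ i))\<^sup>2 *\<^sub>R etaT B H \<rho> i) = 0"
    by (auto simp: ZY_def MY_def PhiY_def)
  have "\<forall>X\<in>\<h>. (\<Sum>i\<in>UNIV. (\<chi> i. (cmod (z $ i))\<^sup>2) $ i * eta \<rho> i X) = 0"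
  proof
    fix X assume X: "X \<in> \<h>"
    have "(\<alpha> + (1/2) *\<^sub>R (\<Sum>i\<in>UNIV. (cmod (z $ i))\<^sup>2 *\<^sub>R etaT B H \<rho> i)) \<bullet> X = 0"
      using \<Phi> by simp
    moreover have "\<alpha> \<bullet> X = 0" using \<alpha> X by (simp add: annih_def)
    ultimately show "(\<Sum>i\<in>UNIV. (\<chi> i. (cmod (z $ i))\<^sup>2) $ i * eta \<rho> i X) = 0"
      by (simp add: inner_add_left inner_sum_left etaT_on_lie_alg[OF X])
  qed
  then obtain a where "(\<chi> i. (cmod (z $ i))\<^sup>2) = a *\<^sub>R (\<chi> i. real (\<xi> i))"
    using eta_relation_proportional_\<xi> by blast
  then have z: "(cmod (z $ i))\<^sup>2 = a * real (\<xi> i)" for i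
    by (simp add: vec_eq_iff)
  then have "(\<Sum>i\<in>UNIV. (cmod (z $ i))\<^sup>2 *\<^sub>R etaT B H \<rho> i)
      = a *\<^sub>R (\<Sum>i\<in>UNIV. real (\<xi> i) *\<^sub>R etaT B H \<rho> i)"
    by (simp add: scaleR_sum_right)
  then have "\<alpha> = 0" using \<Phi> by (simp add: sum_xi_etaT_eq_0)
  then show "t \<in> torus \<and> \<alpha> = 0 \<and> xi_proportional z" using t z by (auto simp: xi_proportional_def)
next
  assume "t \<in> torus \<and> \<alpha> = 0 \<and> xi_proportional z"
  then obtain a where "t \<in> torus" "\<alpha> = 0" and z: "\<And>i. (cmod (z $ i))\<^sup>2 = a * real (\<xi> i)"
    by (auto simp: xi_proportional_def)
  moreover have "(\<Sum>i\<in>UNIV. (cmod (z $ i))\<^sup>2 *\<^sub>R etaT B H \<rho> i)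
      = a *\<^sub>R (\<Sum>i\<in>UNIV. real (\<xi> i) *\<^sub>R etaT B H \<rho> i)"
    by (simp add: z scaleR_sum_right)
  ultimately show "(t, \<alpha>, z) \<in> ZY B H \<rho>"
    by (simp add: ZY_def MY_def PhiY_def annih_def sum_xi_etaT_eq_0)
qed

abbreviation "Gy \<equiv> GY H \<rho>"
abbreviation "Zy \<equiv> ZY B H \<rho>"
abbreviation "K \<equiv> Kgrp \<iota> \<xi>"
abbreviation "Gk \<equiv> GK K"
abbreviation "Zk \<equiv> ZK K"

lemma orb_GY_iff:
  "q \<in> orb Gy (t, \<alpha>, z) \<longleftrightarrow> (\<exists>s h. s \<in> torus \<and> h \<in> H \<and> q = (s * h * t, \<alpha>, \<rho> (vinv h) * z))"
proof
  assume "\<exists>s h. s \<in> torus \<and> h \<in> H \<and> q = (s * h * t, \<alpha>, \<rho> (vinv h) * z)"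
  then obtain s h where sh: "s \<in> torus" "h \<in> H" "q = (s * h * t, \<alpha>, \<rho> (vinv h) * z)" by blast
  let ?g = "\<lambda>(t::complex^'n, \<alpha>::real^'n, z::complex^'m). (s * h * t, \<alpha>, \<rho> (vinv h) * z)"
  have "?g \<in> Gy" unfolding GY_def using sh by blast
  moreover have "q = ?g (t, \<alpha>, z)" using sh by simp
  ultimately show "q \<in> orb Gy (t, \<alpha>, z)" unfolding orb_def by blast
qed (auto simp: orb_def GY_def)

lemma orb_GY_refl: "p \<in> orb Gy p"
  by (cases p) (auto simp: orb_GY_iff torus_one H_one \<rho>_one intro!: exI[of _ 1])

lemma orb_GY_sym:
  assumes "q \<in> orb Gy p"
  shows "p \<in> orb Gy q"
proof -
  obtain t \<alpha> z where p: "p = (t, \<alpha>, z)" by (cases p)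
  obtain s h where sh: "s \<in> torus" "h \<in> H" "q = (s * h * t, \<alpha>, \<rho> (vinv h) * z)"
    using assms unfolding p orb_GY_iff by blast
  have "vinv s * vinv h * (s * h * t) = (vinv s * s) * (vinv h * h) * t" by (simp add: mult_ac)
  then have "vinv s * vinv h * (s * h * t) = t"
    using vinv_mult_self[OF sh(1)] vinv_mult_self[OF H_in_torus[OF sh(2)]] by simp
  moreover have "\<rho> (vinv (vinv h)) * (\<rho> (vinv h) * z) = z"
    using \<rho>_vinv_mult[OF sh(2)] by (simp add: mult_ac)
  ultimately show ?thesis unfolding sh(3) orb_GY_iff p
    by (intro exI[of _ "vinv s"] exI[of _ "vinv h"]) (simp add: torus_vinv sh H_vinv)
qed

lemma orb_GY_trans:
  assumes "q \<in> orb Gy p" "r \<in> orb Gy q"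
  shows "r \<in> orb Gy p"
proof -
  obtain t \<alpha> z where p: "p = (t, \<alpha>, z)" by (cases p)
  obtain s h where sh: "s \<in> torus" "h \<in> H" "q = (s * h * t, \<alpha>, \<rho> (vinv h) * z)"
    using assms(1) unfolding p orb_GY_iff by blast
  obtain s' h' where sh': "s' \<in> torus" "h' \<in> H"
    "r = (s' * h' * (s * h * t), \<alpha>, \<rho> (vinv h') * (\<rho> (vinv h) * z))"
    using assms(2) unfolding sh(3) orb_GY_iff by blast
  have "\<rho> (vinv (h' * h)) = \<rho> (vinv h') * \<rho> (vinv h)"
    using \<rho>_hom H_vinv sh(2) sh'(2) by (simp add: vinv_mult)
  then show ?thesis unfolding sh'(3) orb_GY_iff p
    by (intro exI[of _ "s' * s"] exI[of _ "h' * h"]) (simp add: mult_ac torus_mult sh sh' H_mult)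
qed

lemma orb_GY_eq: "q \<in> orb Gy p \<Longrightarrow> orb Gy q = orb Gy p"
  using orb_GY_sym orb_GY_trans by blast

lemma mem_Union_iff_orb_GY_mem: "U \<subseteq> rpts Gy Z \<Longrightarrow> x \<in> \<Union>U \<longleftrightarrow> orb Gy x \<in> U"
  by (rule mem_Union_iff_orb_mem[OF orb_GY_refl orb_GY_eq])

lemma GY_in_orb: "g \<in> Gy \<Longrightarrow> g x \<in> orb Gy x"
  by (auto simp: orb_def)

lemma ZY_orb_closed:
  assumes "q \<in> orb Gy p" "p \<in> Zy"
  shows "q \<in> Zy"
proof -
  obtain t \<alpha> z where p: "p = (t, \<alpha>, z)" by (cases p)
  obtain s h where sh: "s \<in> torus" "h \<in> H" "q = (s * h * t, \<alpha>, \<rho> (vinv h) * z)"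
    using assms(1) unfolding p orb_GY_iff by blast
  have Z: "t \<in> torus" "\<alpha> = 0" "xi_proportional z" using assms(2) p mem_ZY_iff by auto
  have "cmod (\<rho> (vinv h) $ i) = 1" for i
    using \<rho>_in_torus[OF H_vinv[OF sh(2)]] by (simp add: torus_def)
  then have "xi_proportional (\<rho> (vinv h) * z)"
    using Z(3) by (simp add: xi_proportional_def norm_mult)
  moreover have "s * h * t \<in> torus" using sh H_in_torus[OF sh(2)] Z(1) torus_mult by blast
  ultimately show ?thesis unfolding sh(3) mem_ZY_iff using Z by auto
qed

lemma MY_orb_closed:
  assumes "q \<in> orb Gy p" "p \<in> MY H"
  shows "q \<in> MY H"
proof -
  obtain t \<alpha> z where p: "p = (t, \<alpha>, z)" by (cases p)
  obtain s h where sh: "s \<in> torus" "h \<in> H" "q = (s * h * t, \<alpha>, \<rho> (vinv h) * z)"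
    using assms(1) unfolding p orb_GY_iff by blast
  moreover have "t \<in> torus" using assms(2) p by (simp add: MY_def)
  then have "s * h * t \<in> torus" using sh torus_mult H_in_torus by blast
  ultimately show ?thesis using assms(2) p by (simp add: MY_def)
qed

lemma polyP_orb_GY:
  assumes "q \<in> orb Gy p"
  shows "polyP \<xi> (snd (snd q)) = polyP \<xi> (snd (snd p))"
proof -
  obtain t \<alpha> z where p: "p = (t, \<alpha>, z)" by (cases p)
  obtain s h where "s \<in> torus" "h \<in> H" "q = (s * h * t, \<alpha>, \<rho> (vinv h) * z)"
    using assms(1) unfolding p orb_GY_iff by blast
  then show ?thesis using p polyP_\<rho>[OF H_vinv] by (simp add: polyP_mult)
qed

definition extend_vec :: "complex^'k \<Rightarrow> complex^'m" where
  "extend_vec z = (\<chi> i. if i \<in> range \<iota> then z $ (inv \<iota> i) else 0)"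

definition restrict_vec :: "complex^'m \<Rightarrow> complex^'k" where
  "restrict_vec z = (\<chi> j. z $ (\<iota> j))"

lemma inclY_eq: "inclY \<iota> z = (1, 0, extend_vec z)"
  by (simp add: inclY_def extend_vec_def)

lemma extend_vec_nth_\<iota> [simp]: "extend_vec z $ \<iota> j = z $ j"
  by (simp add: extend_vec_def inv_f_f[OF \<iota>_inj])

lemma restrict_extend_vec [simp]: "restrict_vec (extend_vec z) = z"
  by (simp add: restrict_vec_def extend_vec_def vec_eq_iff inv_f_f[OF \<iota>_inj])

lemma extend_restrict_vec:
  assumes "xi_proportional z"
  shows "extend_vec (restrict_vec z) = z"
proof -
  obtain a where a: "\<And>i. (cmod (z $ i))\<^sup>2 = a * real (\<xi> i)"
    using assms by (auto simp: xi_proportional_def)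
  have "z $ i = 0" if "i \<notin> range \<iota>" for i
    using a[of i] \<xi>_supp that by simp
  then show ?thesis by (auto simp: restrict_vec_def extend_vec_def vec_eq_iff f_inv_into_f)
qed

lemma xi_proportional_extend_vec_iff: "xi_proportional (extend_vec z) \<longleftrightarrow> z \<in> Zk"
proof
  assume "xi_proportional (extend_vec z)"
  then obtain a where a: "\<And>i. (cmod (extend_vec z $ i))\<^sup>2 = a * real (\<xi> i)"
    by (auto simp: xi_proportional_def)
  have "(cmod (z $ j))\<^sup>2 = a * real (\<xi> (\<iota> j))" for j
    using a[of "\<iota> j"] by simp
  then show "z \<in> Zk" by (auto simp: ZK_Kgrp_iff)
next
  assume "z \<in> Zk"
  then obtain a where a: "\<And>j. (cmod (z $ j))\<^sup>2 = a * real (\<xi> (\<iota> j))"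
    by (auto simp: ZK_Kgrp_iff)
  have "(cmod (extend_vec z $ i))\<^sup>2 = a * real (\<xi> i)" for i
    using a[of "inv \<iota> i"] \<xi>_supp by (auto simp: extend_vec_def f_inv_into_f)
  then show "xi_proportional (extend_vec z)" by (auto simp: xi_proportional_def)
qed

lemma restrict_vec_in_ZK: "xi_proportional z \<Longrightarrow> restrict_vec z \<in> Zk"
  using xi_proportional_extend_vec_iff extend_restrict_vec by metis

lemma inclY_in_ZY: "z \<in> Zk \<Longrightarrow> inclY \<iota> z \<in> Zy"
  by (simp add: inclY_eq mem_ZY_iff torus_one xi_proportional_extend_vec_iff)

lemma inclY_restrict_in_orb:
  assumes "p \<in> Zy"
  shows "restrict_vec (snd (snd p)) \<in> Zk" "inclY \<iota> (restrict_vec (snd (snd p))) \<in> orb Gy p"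
proof -
  obtain t \<alpha> z where p: "p = (t, \<alpha>, z)" by (cases p)
  have Z: "t \<in> torus" "\<alpha> = 0" "xi_proportional z" using assms p mem_ZY_iff by auto
  show "restrict_vec (snd (snd p)) \<in> Zk" using restrict_vec_in_ZK[OF Z(3)] p by simp
  have "inclY \<iota> (restrict_vec z) = (vinv t * 1 * t, 0, \<rho> (vinv 1) * z)"
    using extend_restrict_vec[OF Z(3)] vinv_mult_self[OF Z(1)] by (simp add: inclY_eq \<rho>_one)
  then show "inclY \<iota> (restrict_vec (snd (snd p))) \<in> orb Gy p"
    unfolding p orb_GY_iff using Z by (intro exI[of _ "vinv t"] exI[of _ 1]) (simp add: torus_vinv H_one)
qed

text \<open>By exactness, an element of \<open>K\<close> extended by \<open>1\<close> lies in \<open>ker P = \<rho>(H)\<close>.\<close>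

lemma extend_one_in_\<rho>_image:
  assumes l: "l \<in> K"
  shows "\<exists>h\<in>H. \<rho> (vinv h) = (\<chi> i. if i \<in> range \<iota> then l $ (inv \<iota> i) else 1)"
proof -
  define lam where "lam = (\<chi> i. if i \<in> range \<iota> then l $ (inv \<iota> i) else 1)"
  have "lam \<in> torus" using l by (simp add: Kgrp_def torus_def lam_def)
  moreover have "polyP \<xi> lam = 1"
  proof -
    have "polyP \<xi> lam = (\<Prod>i\<in>range \<iota>. (lam $ i) ^ \<xi> i)"
      unfolding polyP_def by (rule prod.mono_neutral_right) (use \<xi>_supp in auto)
    also have "\<dots> = (\<Prod>j\<in>UNIV. (l $ j) ^ \<xi> (\<iota> j))"
      using prod.reindex[OF inj_on_subset[OF \<iota>_inj], of UNIV "\<lambda>i. (lam $ i) ^ \<xi> i"]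
      by (simp add: lam_def inv_f_f[OF \<iota>_inj])
    also have "\<dots> = 1" using l by (simp add: Kgrp_def)
    finally show ?thesis .
  qed
  ultimately obtain h where "h \<in> H" "\<rho> h = lam" using ex_\<rho>_eq by blast
  then have "vinv h \<in> H" "\<rho> (vinv (vinv h)) = lam" using H_vinv by auto
  then show ?thesis unfolding lam_def by blast
qed

lemma inclY_mult_in_orb:
  assumes "l \<in> K"
  shows "inclY \<iota> (l * z) \<in> orb Gy (inclY \<iota> z)"
proof -
  obtain h where h: "h \<in> H" "\<rho> (vinv h) = (\<chi> i. if i \<in> range \<iota> then l $ (inv \<iota> i) else 1)"
    using extend_one_in_\<rho>_image[OF assms] by blast
  have "vinv h * h * 1 = 1" using vinv_mult_self[OF H_in_torus[OF h(1)]] by simp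
  moreover have "\<rho> (vinv h) * extend_vec z = extend_vec (l * z)"
    using h(2) by (simp add: extend_vec_def vec_eq_iff)
  ultimately show ?thesis unfolding inclY_eq orb_GY_iff
    by (intro exI[of _ "vinv h"] exI[of _ h]) (simp add: h(1) torus_vinv H_in_torus)
qed

lemma restrict_\<rho>_in_Kgrp:
  assumes "h \<in> H"
  shows "restrict_vec (\<rho> h) \<in> K"
proof -
  have "(\<Prod>j\<in>UNIV. (\<rho> h $ \<iota> j) ^ \<xi> (\<iota> j)) = (\<Prod>i\<in>range \<iota>. (\<rho> h $ i) ^ \<xi> i)"
    using prod.reindex[OF inj_on_subset[OF \<iota>_inj], of UNIV "\<lambda>i. (\<rho> h $ i) ^ \<xi> i"] by simp
  also have "\<dots> = polyP \<xi> (\<rho> h)"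
    unfolding polyP_def by (rule prod.mono_neutral_left) (use \<xi>_supp in auto)
  also have "\<dots> = 1" using polyP_\<rho> assms by blast
  finally show ?thesis
    using \<rho>_in_torus[OF assms] by (simp add: Kgrp_def torus_def restrict_vec_def)
qed

lemma restrict_vec_orb_GY:
  assumes "q \<in> orb Gy p"
  shows "\<exists>l\<in>K. restrict_vec (snd (snd q)) = l * restrict_vec (snd (snd p))"
proof -
  obtain t \<alpha> z where p: "p = (t, \<alpha>, z)" by (cases p)
  obtain s h where sh: "s \<in> torus" "h \<in> H" "q = (s * h * t, \<alpha>, \<rho> (vinv h) * z)"
    using assms(1) unfolding p orb_GY_iff by blast
  then have "restrict_vec (snd (snd q)) = restrict_vec (\<rho> (vinv h)) * restrict_vec (snd (snd p))"
    using p by (simp add: restrict_vec_def vec_eq_iff)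
  then show ?thesis using restrict_\<rho>_in_Kgrp[OF H_vinv[OF sh(2)]] by blast
qed

lemma orb_GK_if_inclY_orb_GY:
  assumes "inclY \<iota> z1 \<in> orb Gy (inclY \<iota> z2)"
  shows "z1 \<in> orb Gk z2"
  using restrict_vec_orb_GY[OF assms] by (simp add: inclY_eq orb_GK_iff)

abbreviation incl :: "complex^'k \<Rightarrow> (complex^'n) \<times> (real^'n) \<times> (complex^'m)" where
  "incl \<equiv> inclY \<iota>"

definition inclY_linear :: "complex^'k \<Rightarrow> (complex^'n) \<times> (real^'n) \<times> (complex^'m)" where
  "inclY_linear z = (0, 0, extend_vec z)"

definition restrictY :: "(complex^'n) \<times> (real^'n) \<times> (complex^'m) \<Rightarrow> complex^'k" where
  "restrictY p = restrict_vec (snd (snd p))"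

lemma incl_eq_affine: "incl = (\<lambda>z. inclY_linear z + (1, 0, 0))"
  by (simp add: fun_eq_iff inclY_eq inclY_linear_def)

lemma linear_inclY_linear: "linear inclY_linear"
  by (rule linearI) (simp_all add: inclY_linear_def extend_vec_def vec_eq_iff)

lemma linear_restrictY: "linear restrictY"
  by (rule linearI) (simp_all add: restrictY_def restrict_vec_def vec_eq_iff)

lemma extend_vec_axis: "extend_vec (axis j u) = axis (\<iota> j) u"
  by (auto simp: extend_vec_def axis_def vec_eq_iff inv_f_f[OF \<iota>_inj] f_inv_into_f)

lemma restrict_vec_axis:
  "restrict_vec (axis i u) = (if i \<in> range \<iota> then axis (inv \<iota> i) u else 0)"
  by (auto simp: restrict_vec_def axis_def vec_eq_iff inv_f_f[OF \<iota>_inj] f_inv_into_f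
      dest: injD[OF \<iota>_inj])

lemma inclY_linear_Basis: "\<forall>b\<in>Basis. inclY_linear b \<in> Basis \<or> inclY_linear b = 0"
proof
  fix b :: "complex^'k" assume "b \<in> Basis"
  then obtain j u where "u \<in> Basis" "b = axis j u" using Basis_vec_cases by blast
  moreover have "((0::complex^'n), (0::real^'n), axis (\<iota> j) u) \<in> Basis" if "u \<in> Basis"
    using that by (intro Basis_prod3_third) simp
  ultimately show "inclY_linear b \<in> Basis \<or> inclY_linear b = 0"
    by (simp add: inclY_linear_def extend_vec_axis)
qed

lemma restrictY_Basis: "\<forall>b\<in>Basis. restrictY b \<in> Basis \<or> restrictY b = 0"
proof
  fix b :: "(complex^'n) \<times> (real^'n) \<times> (complex^'m)" assume "b \<in> Basis"
  then consider "\<exists>u\<in>Basis. b = (u, 0, 0)" | "\<exists>u\<in>Basis. b = (0, u, 0)" | "\<exists>u\<in>Basis. b = (0, 0, u)"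
    using Basis_prod3_cases by blast
  then show "restrictY b \<in> Basis \<or> restrictY b = 0"
  proof cases
    case 3
    then obtain i u where "u \<in> Basis" "b = (0, 0, axis i u)" using Basis_vec_cases by blast
    then show ?thesis by (simp add: restrictY_def restrict_vec_axis)
  qed (auto simp: restrictY_def restrict_vec_def vec_eq_iff)
qed

lemma smooth_on_compose_incl: "smooth_on V F \<Longrightarrow> smooth_on (incl -` V) (F \<circ> incl)"
  unfolding incl_eq_affine
  by (rule smooth_on_compose_affine[OF _ linear_inclY_linear inclY_linear_Basis])

lemma smooth_on_compose_restrictY: "smooth_on V F \<Longrightarrow> smooth_on (restrictY -` V) (F \<circ> restrictY)"
  by (rule smooth_on_compose_linear[OF _ linear_restrictY restrictY_Basis])

lemma continuous_on_incl: "continuous_on S incl"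
  unfolding incl_eq_affine by (rule continuous_on_affine[OF linear_inclY_linear])

lemma continuous_on_restrictY: "continuous_on S restrictY"
  using continuous_on_affine[OF linear_restrictY, of S 0] by simp

abbreviation "Rk \<equiv> rpts Gk Zk"
abbreviation "Ry \<equiv> rpts Gy Zy"
abbreviation "ind \<equiv> induced H \<rho> \<iota>"

lemma induced_orb_GK: "ind (orb Gk z) = orb Gy (incl z)"
proof -
  have "(SOME z'. z' \<in> orb Gk z) \<in> orb Gk z" using orb_GK_Kgrp_refl by (rule someI)
  then obtain l where "l \<in> K" "(SOME z'. z' \<in> orb Gk z) = l * z" using orb_GK_iff by blast
  then show ?thesis unfolding induced_def using inclY_mult_in_orb orb_GY_eq by metis
qed

lemma incl_in_MY: "incl z \<in> MY H"
  by (simp add: inclY_eq MY_def torus_one annih_def)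

lemma ZY_subset_MY: "Zy \<subseteq> MY H"
  by (auto simp: ZY_def)

lemma restrictY_in_ZK: "p \<in> Zy \<Longrightarrow> restrictY p \<in> Zk"
  using inclY_restrict_in_orb(1) by (simp add: restrictY_def)

lemma orb_GY_incl_restrictY: "p \<in> Zy \<Longrightarrow> orb Gy (incl (restrictY p)) = orb Gy p"
  using orb_GY_eq[OF inclY_restrict_in_orb(2)] by (simp add: restrictY_def)

lemma bij_betw_induced: "bij_betw ind Rk Ry"
  unfolding bij_betw_def
proof
  show "inj_on ind Rk"
  proof (rule inj_onI)
    fix c1 c2 assume "c1 \<in> Rk" "c2 \<in> Rk" "ind c1 = ind c2"
    then obtain z1 z2 where z: "c1 = orb Gk z1" "c2 = orb Gk z2"
      and "orb Gy (incl z1) = orb Gy (incl z2)"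
      by (auto simp: rpts_def induced_orb_GK)
    then have "incl z1 \<in> orb Gy (incl z2)" using orb_GY_refl by blast
    then show "c1 = c2" using z orb_GK_if_inclY_orb_GY orb_GK_Kgrp_eq by metis
  qed
  show "ind ` Rk = Ry"
  proof
    show "ind ` Rk \<subseteq> Ry" by (auto simp: rpts_def induced_orb_GK inclY_in_ZY)
    show "Ry \<subseteq> ind ` Rk"
    proof
      fix c assume "c \<in> Ry"
      then obtain p where p: "p \<in> Zy" "c = orb Gy p" by (auto simp: rpts_def)
      then have "c = ind (orb Gk (restrictY p))"
        by (simp add: induced_orb_GK orb_GY_incl_restrictY)
      then show "c \<in> ind ` Rk" using restrictY_in_ZK[OF p(1)] by (auto simp: rpts_def)
    qed
  qed
qed

lemma Union_vimage_induced:
  assumes "U \<subseteq> Ry"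
  shows "\<Union>(ind -` U \<inter> Rk) = Zk \<inter> incl -` \<Union>U"
proof (intro set_eqI iffI)
  fix z assume "z \<in> \<Union>(ind -` U \<inter> Rk)"
  then obtain z' where z': "z' \<in> Zk" "ind (orb Gk z') \<in> U" "z \<in> orb Gk z'"
    by (auto simp: rpts_def)
  then have "z \<in> Zk" "orb Gk z = orb Gk z'"
    using ZK_Kgrp_orb_closed[OF z'(3,1)] orb_GK_Kgrp_eq[OF z'(3)] by auto
  then have "orb Gy (incl z) \<in> U" using z'(2) induced_orb_GK by metis
  with \<open>z \<in> Zk\<close> show "z \<in> Zk \<inter> incl -` \<Union>U" using mem_Union_iff_orb_GY_mem[OF assms] by blast
next
  fix z assume z: "z \<in> Zk \<inter> incl -` \<Union>U"
  then have "ind (orb Gk z) \<in> U" using mem_Union_iff_orb_GY_mem[OF assms] by (simp add: induced_orb_GK)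
  moreover have "orb Gk z \<in> Rk" using z by (auto simp: rpts_def)
  ultimately show "z \<in> \<Union>(ind -` U \<inter> Rk)" using orb_GK_Kgrp_refl by blast
qed

lemma Union_subset_ZY: "U \<subseteq> Ry \<Longrightarrow> \<Union>U \<subseteq> Zy"
  by (auto simp: rpts_def intro: ZY_orb_closed)

lemma mem_Union_iff_incl_restrictY:
  assumes "U \<subseteq> Ry" "p \<in> Zy"
  shows "p \<in> \<Union>U \<longleftrightarrow> incl (restrictY p) \<in> \<Union>U"
  using mem_Union_iff_orb_GY_mem[OF assms(1)] orb_GY_incl_restrictY[OF assms(2)] by metis

lemma Union_eq_restrictY_vimage:
  assumes "U \<subseteq> Ry"
  shows "\<Union>U = Zy \<inter> restrictY -` (Zk \<inter> incl -` \<Union>U)"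
  using mem_Union_iff_incl_restrictY[OF assms] Union_subset_ZY[OF assms] restrictY_in_ZK by blast

lemma restrictY_vimage_Int_ZY:
  assumes U: "U \<subseteq> Ry" and W': "W' \<inter> Zk = Zk \<inter> incl -` \<Union>U"
  shows "MY H \<inter> restrictY -` W' \<inter> Zy = \<Union>U"
proof (intro set_eqI iffI)
  fix p assume p: "p \<in> MY H \<inter> restrictY -` W' \<inter> Zy"
  then have "restrictY p \<in> W' \<inter> Zk" using restrictY_in_ZK by auto
  then show "p \<in> \<Union>U" using W' mem_Union_iff_incl_restrictY[OF U] p by blast
next
  fix p assume p: "p \<in> \<Union>U"
  then have "p \<in> Zy" using Union_subset_ZY[OF U] by blast
  then have "restrictY p \<in> Zk \<inter> incl -` \<Union>U"
    using p restrictY_in_ZK mem_Union_iff_incl_restrictY[OF U] by blast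
  then show "p \<in> MY H \<inter> restrictY -` W' \<inter> Zy" using W' \<open>p \<in> Zy\<close> ZY_subset_MY by auto
qed

lemma r_open_iff_induced:
  assumes U: "U \<subseteq> Ry"
  shows "r_open Gy Zy U \<longleftrightarrow> r_open Gk Zk (ind -` U \<inter> Rk)"
proof
  assume "r_open Gy Zy U"
  then have "openin (top_of_set Zy) (\<Union>U)" by (simp add: r_open_def)
  then have "openin (top_of_set Zk) (Zk \<inter> incl -` \<Union>U)"
    using continuous_openin_preimage[OF continuous_on_incl] inclY_in_ZY by blast
  then show "r_open Gk Zk (ind -` U \<inter> Rk)" by (simp add: r_open_def Union_vimage_induced[OF U])
next
  assume "r_open Gk Zk (ind -` U \<inter> Rk)"
  then have "openin (top_of_set Zk) (Zk \<inter> incl -` \<Union>U)"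
    by (simp add: r_open_def Union_vimage_induced[OF U])
  then have "openin (top_of_set Zy) (Zy \<inter> restrictY -` (Zk \<inter> incl -` \<Union>U))"
    using continuous_openin_preimage[OF continuous_on_restrictY] restrictY_in_ZK by blast
  then have "openin (top_of_set Zy) (\<Union>U)" by (simp only: flip: Union_eq_restrictY_vimage[OF U])
  then show "r_open Gy Zy U" using U by (simp add: r_open_def)
qed

text \<open>A smooth invariant extension on \<open>Y\<close> restricts along \<open>incl\<close>, and one on
  \<open>\<complex>\<^sup>k\<^sup>+\<^sup>1\<close> pulls back along \<open>restrictY\<close>; \<open>K\<close>-invariance matches \<open>T\<close>-invariance because
  \<open>K\<close> is the image of \<open>H\<close> under restriction.\<close>

lemma r_smooth_induced_if_r_smooth:
  assumes U: "r_open Gy Zy U" and S: "r_smooth (MY H) Gy Zy U f"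
  shows "r_smooth UNIV Gk Zk (ind -` U \<inter> Rk) (f \<circ> ind)"
proof -
  have UR: "U \<subseteq> Ry" using U by (simp add: r_open_def)
  obtain W F where inv: "\<forall>g\<in>Gy. \<forall>x\<in>W. g x \<in> W" and WZ: "W \<inter> Zy = \<Union>U"
    and sm: "smooth_sub (MY H) W F" and F_inv: "\<forall>g\<in>Gy. \<forall>x\<in>W. F (g x) = F x"
    and F_f: "\<forall>x\<in>\<Union>U. F x = f (orb Gy x)"
    using S unfolding r_smooth_def by blast
  obtain V F' where V: "V \<inter> MY H = W" "smooth_on V F'" "\<forall>x\<in>W. F' x = F x"
    using sm unfolding smooth_sub_def by blast
  have in_W: "incl z \<in> W \<longleftrightarrow> incl z \<in> V" for z using V(1) incl_in_MY by blast
  define W' where "W' = incl -` V"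
  have sm': "smooth_on W' (F' \<circ> incl)" unfolding W'_def by (rule smooth_on_compose_incl[OF V(2)])
  then have "open W'" by (simp add: smooth_on_def)
  have GK_inv: "g x \<in> W' \<and> F (incl (g x)) = F (incl x)" if g: "g \<in> Gk" and x: "x \<in> W'" for g x
  proof -
    obtain l where l: "l \<in> K" "g = (\<lambda>z. l * z)" using g by (auto simp: GK_def)
    obtain g' where g': "g' \<in> Gy" "incl (l * x) = g' (incl x)"
      using inclY_mult_in_orb[OF l(1)] by (auto simp: orb_def)
    have "incl x \<in> W" using x in_W by (simp add: W'_def)
    then have "incl (l * x) \<in> W" "F (incl (l * x)) = F (incl x)"
      using inv F_inv g' by auto
    then show ?thesis using in_W l(2) by (simp add: W'_def)
  qed
  show ?thesis
    unfolding r_smooth_def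
  proof (intro exI[of _ W'] exI[of _ "F \<circ> incl"] conjI ballI)
    show "openin (top_of_set UNIV) W'" using \<open>open W'\<close> by simp
    show "W' \<inter> Zk = \<Union>(ind -` U \<inter> Rk)"
      unfolding Union_vimage_induced[OF UR] W'_def using in_W WZ inclY_in_ZY by blast
    show "smooth_sub UNIV W' (F \<circ> incl)"
      unfolding smooth_sub_def using \<open>open W'\<close> sm' V(3) in_W
      by (intro exI[of _ W'] exI[of _ "F' \<circ> incl"]) (auto simp: W'_def)
    show "\<And>g x. g \<in> Gk \<Longrightarrow> x \<in> W' \<Longrightarrow> g x \<in> W'"
      and "\<And>g x. g \<in> Gk \<Longrightarrow> x \<in> W' \<Longrightarrow> (F \<circ> incl) (g x) = (F \<circ> incl) x"
      using GK_inv by auto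
    show "(F \<circ> incl) x = (f \<circ> ind) (orb Gk x)" if "x \<in> \<Union>(ind -` U \<inter> Rk)" for x
    proof -
      have "incl x \<in> \<Union>U" using that Union_vimage_induced[OF UR] by blast
      then show ?thesis using F_f by (simp only: comp_apply induced_orb_GK)
    qed
  qed
qed

lemma r_smooth_if_r_smooth_induced:
  assumes U: "r_open Gy Zy U" and S: "r_smooth UNIV Gk Zk (ind -` U \<inter> Rk) (f \<circ> ind)"
  shows "r_smooth (MY H) Gy Zy U f"
proof -
  have UR: "U \<subseteq> Ry" using U by (simp add: r_open_def)
  obtain W' F' where inv: "\<forall>g\<in>Gk. \<forall>x\<in>W'. g x \<in> W'" and WZ: "W' \<inter> Zk = Zk \<inter> incl -` \<Union>U"
    and sm: "smooth_sub UNIV W' F'" and F_inv: "\<forall>g\<in>Gk. \<forall>x\<in>W'. F' (g x) = F' x"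
    and F_f: "\<forall>x\<in>Zk \<inter> incl -` \<Union>U. F' x = f (orb Gy (incl x))"
    using S unfolding r_smooth_def Union_vimage_induced[OF UR] by (auto simp: induced_orb_GK)
  obtain F3 where F3: "smooth_on W' F3" "\<forall>x\<in>W'. F3 x = F' x"
    using sm unfolding smooth_sub_def by auto
  define W where "W = MY H \<inter> restrictY -` W'"
  have sm3: "smooth_on (restrictY -` W') (F3 \<circ> restrictY)"
    by (rule smooth_on_compose_restrictY[OF F3(1)])
  then have "open (restrictY -` W')" by (simp add: smooth_on_def)
  have GY_inv: "g x \<in> W \<and> F' (restrictY (g x)) = F' (restrictY x)" if g: "g \<in> Gy" and x: "x \<in> W"
    for g x
  proof -
    have "g x \<in> orb Gy x" using GY_in_orb[OF g] .
    then obtain l where "l \<in> K" "restrictY (g x) = l * restrictY x"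
      using restrict_vec_orb_GY[of "g x" x] by (auto simp: restrictY_def)
    moreover have "g x \<in> MY H" using MY_orb_closed \<open>g x \<in> orb Gy x\<close> x by (auto simp: W_def)
    ultimately show ?thesis using inv F_inv x by (auto simp: W_def GK_def)
  qed
  show ?thesis
    unfolding r_smooth_def
  proof (intro exI[of _ W] exI[of _ "F' \<circ> restrictY"] conjI ballI)
    show "openin (top_of_set (MY H)) W" unfolding W_def using \<open>open (restrictY -` W')\<close> by blast
    show "W \<inter> Zy = \<Union>U"
      unfolding W_def by (rule restrictY_vimage_Int_ZY[OF UR WZ])
    show "smooth_sub (MY H) W (F' \<circ> restrictY)"
      unfolding smooth_sub_def using \<open>open (restrictY -` W')\<close> sm3 F3(2)
      by (intro exI[of _ "restrictY -` W'"] exI[of _ "F3 \<circ> restrictY"]) (auto simp: W_def)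
    show "\<And>g x. g \<in> Gy \<Longrightarrow> x \<in> W \<Longrightarrow> g x \<in> W"
      and "\<And>g x. g \<in> Gy \<Longrightarrow> x \<in> W \<Longrightarrow> (F' \<circ> restrictY) (g x) = (F' \<circ> restrictY) x"
      using GY_inv by auto
    show "(F' \<circ> restrictY) x = f (orb Gy x)" if x: "x \<in> \<Union>U" for x
    proof -
      have "x \<in> Zy" using x Union_subset_ZY[OF UR] by blast
      then have "restrictY x \<in> Zk \<inter> incl -` \<Union>U"
        using x Union_eq_restrictY_vimage[OF UR] by blast
      then show ?thesis using F_f orb_GY_incl_restrictY[OF \<open>x \<in> Zy\<close>] by simp
    qed
  qed
qed

theorem diffeo_induced: "diffeo Rk (r_open Gk Zk) (r_smooth UNIV Gk Zk) Ry (r_open Gy Zy) (r_smooth (MY H) Gy Zy) ind"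
  unfolding diffeo_def
  using bij_betw_induced r_open_iff_induced r_smooth_induced_if_r_smooth
    r_smooth_if_r_smooth_induced by blast

end

section \<open>The case \<open>P(z) = z\<^sub>i\<^sub>0\<close>\<close>

locale local_model_coordinate = local_model H \<rho> B \<xi> \<iota>
  for H :: "(complex^'n) set" and \<rho> :: "complex^'n \<Rightarrow> complex^'m" and B :: "real^'n^'n"
    and \<xi> :: "'m \<Rightarrow> nat" and \<iota> :: "'k::finite \<Rightarrow> 'm" +
  fixes i0 :: 'm
  assumes \<xi>_eq: "\<xi> = (\<lambda>i. if i = i0 then 1 else 0)"
begin

definition coord :: "(complex^'n) \<times> (real^'n) \<times> (complex^'m) \<Rightarrow> complex" where
  "coord p = snd (snd p) $ i0"

abbreviation embed :: "complex \<Rightarrow> (complex^'n) \<times> (real^'n) \<times> (complex^'m)" where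
  "embed w \<equiv> (1, 0, \<chi> i. if i = i0 then w else 0)"

lemma polyP_eq_nth: "polyP \<xi> z = z $ i0"
proof -
  have "polyP \<xi> z = (\<Prod>i\<in>UNIV. if i = i0 then z $ i else 1)"
    unfolding polyP_def \<xi>_eq by (rule prod.cong) auto
  then show ?thesis by simp
qed

lemma coord_orb_GY: "q \<in> orb Gy p \<Longrightarrow> coord q = coord p"
  unfolding coord_def polyP_eq_nth[symmetric] by (rule polyP_orb_GY)

lemma Pbar_orb_GY: "Pbar \<xi> (orb Gy p) = coord p"
proof -
  have "(SOME q. q \<in> orb Gy p) \<in> orb Gy p" using orb_GY_refl by (rule someI)
  then show ?thesis unfolding Pbar_def polyP_eq_nth[symmetric] coord_def by (rule polyP_orb_GY)
qed

lemma embed_in_ZY: "embed w \<in> Zy"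
proof -
  have "xi_proportional (\<chi> i. if i = i0 then w else 0)"
    unfolding xi_proportional_def by (rule exI[of _ "(cmod w)\<^sup>2"]) (simp add: \<xi>_eq)
  then show ?thesis by (simp add: mem_ZY_iff torus_one)
qed

lemma coord_embed [simp]: "coord (embed w) = w"
  by (simp add: coord_def)

text \<open>On \<open>\<Phi>\<^sub>Y\<^sup>-\<^sup>1(0)\<close> all coordinates but the \<open>i0\<close>-th vanish.\<close>

lemma orb_GY_embed_coord:
  assumes p: "p \<in> Zy"
  shows "orb Gy (embed (coord p)) = orb Gy p"
proof -
  obtain t \<alpha> z where pp: "p = (t, \<alpha>, z)" by (cases p)
  then have z: "xi_proportional z" using p mem_ZY_iff by auto
  then obtain a where a: "\<And>i. (cmod (z $ i))\<^sup>2 = a * real (\<xi> i)"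
    by (auto simp: xi_proportional_def)
  have z0: "z $ i = 0" if "i \<noteq> i0" for i using a[of i] that by (simp add: \<xi>_eq)
  have "incl (restrictY p) = (1, 0, z)"
    using extend_restrict_vec[OF z] pp by (simp add: inclY_eq restrictY_def)
  also have "\<dots> = embed (coord p)" using pp z0 by (auto simp: coord_def vec_eq_iff)
  finally show ?thesis using orb_GY_incl_restrictY[OF p] by simp
qed

lemma orb_GY_embed_in_rpts: "orb Gy (embed w) \<in> Ry"
  unfolding rpts_def using embed_in_ZY by (rule imageI)

lemma Pbar_orb_GY_embed: "Pbar \<xi> (orb Gy (embed w)) = w"
  by (simp add: Pbar_orb_GY)

lemma bij_betw_Pbar: "bij_betw (Pbar \<xi>) Ry UNIV"
  unfolding bij_betw_def
proof
  show "inj_on (Pbar \<xi>) Ry"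
  proof (rule inj_onI)
    fix c1 c2 assume "c1 \<in> Ry" "c2 \<in> Ry" and eq: "Pbar \<xi> c1 = Pbar \<xi> c2"
    then obtain p1 p2 where p: "p1 \<in> Zy" "c1 = orb Gy p1" "p2 \<in> Zy" "c2 = orb Gy p2"
      unfolding rpts_def by blast
    then have "coord p1 = coord p2" using eq by (simp add: Pbar_orb_GY)
    then show "c1 = c2" using orb_GY_embed_coord[OF p(1)] orb_GY_embed_coord[OF p(3)] p(2,4) by metis
  qed
  have "w \<in> Pbar \<xi> ` Ry" for w
    using orb_GY_embed_in_rpts[of w] Pbar_orb_GY_embed[of w] by (metis image_eqI)
  then show "Pbar \<xi> ` Ry = UNIV" by blast
qed

lemma Union_vimage_Pbar: "\<Union>(Pbar \<xi> -` U \<inter> Ry) = Zy \<inter> coord -` U"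
proof (intro set_eqI iffI)
  fix p assume "p \<in> \<Union>(Pbar \<xi> -` U \<inter> Ry)"
  then obtain q where q: "q \<in> Zy" "coord q \<in> U" "p \<in> orb Gy q"
    by (auto simp: rpts_def Pbar_orb_GY)
  then show "p \<in> Zy \<inter> coord -` U" using ZY_orb_closed[OF q(3,1)] coord_orb_GY[OF q(3)] by simp
next
  fix p assume "p \<in> Zy \<inter> coord -` U"
  then have "orb Gy p \<in> Pbar \<xi> -` U \<inter> Ry" by (auto simp: rpts_def Pbar_orb_GY)
  then show "p \<in> \<Union>(Pbar \<xi> -` U \<inter> Ry)" using orb_GY_refl by blast
qed

definition embed_linear :: "complex \<Rightarrow> (complex^'n) \<times> (real^'n) \<times> (complex^'m)" where
  "embed_linear w = (0, 0, axis i0 w)"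

lemma embed_eq_affine: "embed = (\<lambda>w. embed_linear w + (1, 0, 0))"
  by (simp add: fun_eq_iff embed_linear_def axis_def)

lemma linear_embed_linear: "linear embed_linear"
  by (rule linearI) (simp_all add: embed_linear_def axis_def vec_eq_iff)

lemma linear_coord: "linear coord"
  by (rule linearI) (simp_all add: coord_def)

lemma embed_linear_Basis: "\<forall>b\<in>Basis. embed_linear b \<in> Basis \<or> embed_linear b = 0"
proof
  fix b :: complex assume "b \<in> Basis"
  then have "((0::complex^'n), (0::real^'n), (axis i0 b :: complex^'m)) \<in> Basis"
    by (intro Basis_prod3_third) simp
  then show "embed_linear b \<in> Basis \<or> embed_linear b = 0" by (simp add: embed_linear_def)
qed

lemma coord_Basis: "\<forall>b\<in>Basis. coord b \<in> Basis \<or> coord b = 0"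
proof
  fix b :: "(complex^'n) \<times> (real^'n) \<times> (complex^'m)" assume "b \<in> Basis"
  then consider "\<exists>u\<in>Basis. b = (u, 0, 0)" | "\<exists>u\<in>Basis. b = (0, u, 0)" | "\<exists>u\<in>Basis. b = (0, 0, u)"
    using Basis_prod3_cases by blast
  then show "coord b \<in> Basis \<or> coord b = 0"
  proof cases
    case 3
    then obtain i u where "u \<in> Basis" "b = (0, 0, axis i u)" using Basis_vec_cases by blast
    then show ?thesis by (simp add: coord_def axis_def)
  qed (auto simp: coord_def)
qed

lemma continuous_on_embed: "continuous_on S embed"
  unfolding embed_eq_affine by (rule continuous_on_affine[OF linear_embed_linear])

lemma open_iff_r_open_Pbar: "open U \<longleftrightarrow> r_open Gy Zy (Pbar \<xi> -` U \<inter> Ry)"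
proof -
  have r_open_iff: "r_open Gy Zy (Pbar \<xi> -` U \<inter> Ry) \<longleftrightarrow> openin (top_of_set Zy) (Zy \<inter> coord -` U)"
    unfolding r_open_def Union_vimage_Pbar by blast
  have cont_coord: "continuous_on S coord" for S
    using continuous_on_affine[OF linear_coord, of S 0] by simp
  show ?thesis
  proof
    assume "open U"
    then show "r_open Gy Zy (Pbar \<xi> -` U \<inter> Ry)"
      unfolding r_open_iff by (rule continuous_openin_preimage_gen[OF cont_coord])
  next
    assume "r_open Gy Zy (Pbar \<xi> -` U \<inter> Ry)"
    then have "openin (top_of_set Zy) (Zy \<inter> coord -` U)" using r_open_iff by blast
    moreover have "embed \<in> UNIV \<rightarrow> Zy" using embed_in_ZY by blast
    ultimately have "openin (top_of_set UNIV) (UNIV \<inter> embed -` (Zy \<inter> coord -` U))"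
      using continuous_openin_preimage[OF continuous_on_embed] by blast
    moreover have "UNIV \<inter> embed -` (Zy \<inter> coord -` U) = U" using embed_in_ZY by auto
    ultimately show "open U" by simp
  qed
qed

lemma smooth_on_iff_r_smooth_Pbar:
  assumes U: "open U"
  shows "smooth_on U f \<longleftrightarrow> r_smooth (MY H) Gy Zy (Pbar \<xi> -` U \<inter> Ry) (f \<circ> Pbar \<xi>)"
proof
  assume sm: "smooth_on U f"
  have sm_coord: "smooth_on (coord -` U) (f \<circ> coord)"
    by (rule smooth_on_compose_linear[OF sm linear_coord coord_Basis])
  then have "open (coord -` U)" by (simp add: smooth_on_def)
  show "r_smooth (MY H) Gy Zy (Pbar \<xi> -` U \<inter> Ry) (f \<circ> Pbar \<xi>)"
    unfolding r_smooth_def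
  proof (intro exI[of _ "MY H \<inter> coord -` U"] exI[of _ "f \<circ> coord"] conjI ballI)
    show "openin (top_of_set (MY H)) (MY H \<inter> coord -` U)" using \<open>open (coord -` U)\<close> by blast
    show "g x \<in> MY H \<inter> coord -` U" if "g \<in> Gy" "x \<in> MY H \<inter> coord -` U" for g x
      using that MY_orb_closed[OF GY_in_orb[OF that(1)]] coord_orb_GY[OF GY_in_orb[OF that(1)]]
      by auto
    show "MY H \<inter> coord -` U \<inter> Zy = \<Union>(Pbar \<xi> -` U \<inter> Ry)"
      unfolding Union_vimage_Pbar using ZY_subset_MY by blast
    show "smooth_sub (MY H) (MY H \<inter> coord -` U) (f \<circ> coord)"
      unfolding smooth_sub_def using \<open>open (coord -` U)\<close> sm_coord
      by (intro exI[of _ "coord -` U"] exI[of _ "f \<circ> coord"]) auto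
    show "(f \<circ> coord) (g x) = (f \<circ> coord) x" if "g \<in> Gy" for g x
      using coord_orb_GY[OF GY_in_orb[OF that]] by simp
    show "(f \<circ> coord) x = (f \<circ> Pbar \<xi>) (orb Gy x)" for x
      by (simp add: Pbar_orb_GY)
  qed
next
  assume "r_smooth (MY H) Gy Zy (Pbar \<xi> -` U \<inter> Ry) (f \<circ> Pbar \<xi>)"
  then obtain W F where WZ: "W \<inter> Zy = Zy \<inter> coord -` U" and sm: "smooth_sub (MY H) W F"
    and F_f: "\<forall>x\<in>Zy \<inter> coord -` U. F x = f (Pbar \<xi> (orb Gy x))"
    unfolding r_smooth_def Union_vimage_Pbar by auto
  obtain V F' where V: "V \<inter> MY H = W" "smooth_on V F'" "\<forall>x\<in>W. F' x = F x"
    using sm unfolding smooth_sub_def by blast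
  have sm_embed: "smooth_on (embed -` V) (F' \<circ> embed)"
    unfolding embed_eq_affine
    by (rule smooth_on_compose_affine[OF V(2) linear_embed_linear embed_linear_Basis])
  have embed_in_W: "embed w \<in> W" if "w \<in> U" for w using that WZ embed_in_ZY by auto
  then have "U \<subseteq> embed -` V" using V(1) by auto
  moreover have "\<forall>w\<in>U. (F' \<circ> embed) w = f w"
    using embed_in_W V(3) F_f embed_in_ZY by (simp add: Pbar_orb_GY)
  ultimately show "smooth_on U f" by (rule smooth_on_cong_open[OF sm_embed U])
qed

theorem diffeo_Pbar:
  "diffeo Ry (r_open Gy Zy) (r_smooth (MY H) Gy Zy) UNIV open smooth_on (Pbar \<xi>)
   \<and> (\<forall>w. orb Gy (embed w) \<in> Ry \<and> Pbar \<xi> (orb Gy (embed w)) = w)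
   \<and> (\<forall>c\<in>Ry. orb Gy (embed (Pbar \<xi> c)) = c)"
proof (intro conjI allI ballI)
  show "diffeo Ry (r_open Gy Zy) (r_smooth (MY H) Gy Zy) UNIV open smooth_on (Pbar \<xi>)"
    unfolding diffeo_def using bij_betw_Pbar open_iff_r_open_Pbar smooth_on_iff_r_smooth_Pbar by blast
  show "orb Gy (embed w) \<in> Ry" "Pbar \<xi> (orb Gy (embed w)) = w" for w
    by (rule orb_GY_embed_in_rpts, rule Pbar_orb_GY_embed)
  fix c assume "c \<in> Ry"
  then obtain p where "p \<in> Zy" "c = orb Gy p" by (auto simp: rpts_def)
  then show "orb Gy (embed (Pbar \<xi> c)) = c" using orb_GY_embed_coord by (simp only: Pbar_orb_GY)
qed

end

theorem lemma2p6:
  fixes H :: "(complex^'n) set"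
    and \<rho> :: "complex^'n \<Rightarrow> complex^'m"
    and B :: "real^'n^'n"
    and \<xi> :: "'m \<Rightarrow> nat"
    and \<iota> :: "'k::finite \<Rightarrow> 'm"
  assumes H: "closed_subgroup H"
    and dimm: "CARD('m) = dim (lie_alg H) + 1"
    and \<rho>_hom: "\<forall>a\<in>H. \<forall>b\<in>H. \<rho> (a * b) = \<rho> a * \<rho> b"
    and \<rho>_cont: "continuous_on H \<rho>"
    and \<rho>_inj: "inj_on \<rho> H"
    and \<rho>_torus: "\<rho> ` H \<subseteq> torus"
    and B_sym: "transpose B = B"
    and B_pos: "\<forall>x. x \<noteq> 0 \<longrightarrow> x \<bullet> (B *v x) > 0"
    and Y_tall: "tall B H \<rho>"
    and \<xi>_def: "exact_seq H \<rho> \<xi>"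
    and \<iota>_inj: "inj \<iota>"
    and \<xi>_supp: "\<forall>i. i \<notin> range \<iota> \<longrightarrow> \<xi> i = 0"
  shows "(\<forall>z\<in>ZK (Kgrp \<iota> \<xi>). inclY \<iota> z \<in> ZY B H \<rho> \<and>
             induced H \<rho> \<iota> (orb (GK (Kgrp \<iota> \<xi>)) z) = orb (GY H \<rho>) (inclY \<iota> z))
      \<and> diffeo (rpts (GK (Kgrp \<iota> \<xi>)) (ZK (Kgrp \<iota> \<xi>)))
               (r_open (GK (Kgrp \<iota> \<xi>)) (ZK (Kgrp \<iota> \<xi>)))
               (r_smooth UNIV (GK (Kgrp \<iota> \<xi>)) (ZK (Kgrp \<iota> \<xi>)))
               (rpts (GY H \<rho>) (ZY B H \<rho>)) (r_open (GY H \<rho>) (ZY B H \<rho>))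
               (r_smooth (MY H) (GY H \<rho>) (ZY B H \<rho>))
               (induced H \<rho> \<iota>)
      \<and> (\<forall>i0. \<xi> = (\<lambda>i. if i = i0 then 1 else 0) \<longrightarrow>
           diffeo (rpts (GY H \<rho>) (ZY B H \<rho>)) (r_open (GY H \<rho>) (ZY B H \<rho>))
                  (r_smooth (MY H) (GY H \<rho>) (ZY B H \<rho>))
                  UNIV open smooth_on (Pbar \<xi>)
           \<and> (\<forall>w. orb (GY H \<rho>) (1, 0, \<chi> i. if i = i0 then w else 0) \<in> rpts (GY H \<rho>) (ZY B H \<rho>)
                 \<and> Pbar \<xi> (orb (GY H \<rho>) (1, 0, \<chi> i. if i = i0 then w else 0)) = w)
           \<and> (\<forall>c\<in>rpts (GY H \<rho>) (ZY B H \<rho>).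
                 orb (GY H \<rho>) (1, 0, \<chi> i. if i = i0 then Pbar \<xi> c else 0) = c))"
proof -
  have model: "local_model H \<rho> B \<xi> \<iota>"
    by unfold_locales (fact H dimm \<rho>_hom \<rho>_cont \<rho>_inj \<rho>_torus B_sym B_pos \<xi>_def \<iota>_inj \<xi>_supp)+
  have coordinate: "local_model_coordinate H \<rho> B \<xi> \<iota> i0" if "\<xi> = (\<lambda>i. if i = i0 then 1 else 0)" for i0
    using model that by (intro local_model_coordinate.intro local_model_coordinate_axioms.intro)
  show ?thesis
    using local_model.inclY_in_ZY[OF model] local_model.induced_orb_GK[OF model]
      local_model.diffeo_induced[OF model] local_model_coordinate.diffeo_Pbar[OF coordinate]
    by blast
qed

end
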